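(* Assume the setting of the context (random weights). Fix a compact interval $I\subset(0,\infty)$ and $r,\varepsilon>0$, and suppose Assumptions (A1R) and (A2R) hold. Then \[\lim_{n\rightarrow\infty}\mathbb{P}_{\mu}\left(\sup_{x\in B_F(\rho,r)}\sup_{t\in I}\left|\beta(n)q^n_{\lfloor\gamma(n)t\rfloor}(g_n(x))-q_t(x)\right|>\varepsilon\right)=0.\]
   Context: Let $(E,d_E)$ be a metric space and $F\subseteq E$ such that $F\cap\overline{B}_E(x,r)$ is compact for all $x\in E$, $r>0$ ($\overline{B}_E$, $B_E$ closed and open balls in $E$). Let $d_F:=d_E|_{F\times F}$, $B_F(x,r)$ the open ball in $(F,d_F)$, $\rho\in F$, $\nu$ a Radon measure of full support on $(F,d_F)$ (extended to $E$ by $\nu(A):=\nu(A\cap F)$), and $(q_t(x))_{x\in F,t>0}$ jointly continuous in $(t,x)$ with $q_t\ge0$, $\int_Fq_t\,d\nu=1$ for each $t>0$. For a locally finite connected graph $G$ with at least two vertices and distinguished vertex $\rho(G)$: $d_G$ is the shortest-path metric, $B_G(x,r)$ the open $d_G$-ball; $\mu^G$ a symmetric weight with $\mu^G_{xy}>0$ iff $\{x,y\}$ is an edge; $\mu^G_x:=\sum_y\mu^G_{xy}$; $\nu^G(A):=\sum_{x\in A}\mu^G_x$; $X^G$ the discrete time simple random walk with $P_G(x,y)=\mu^G_{xy}/\mu^G_x$, law $\mathbf{P}^G_x$; $p^G_m(x,y):=\mathbf{P}^G_x(X^G_m=y)/\nu^G(\{y\})$, $q^G_m(x,y):=\frac12(p^G_m+p^G_{m+1})(x,y)$,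 $q^G_m(x):=q^G_m(\rho(G),x)$. $(G^n)_{n\ge1}$ are such graphs with $V(G^n)\subseteq E$, $\rho(G^n)=\rho$; write $\nu^n,X^n,q^n$ for $\nu^{G^n},X^{G^n},q^{G^n}$. The weights of all the $G^n$ are random, given by a random element of $(0,\infty)^{\cup_nE(G^n)}$ with law $\mathbb{P}_\mu$; hence $\nu^n$, $\mathbf{P}^{G^n}$, $q^n$ are random. $(\alpha(n)),(\beta(n)),(\gamma(n))$ are non-negative deterministic sequences diverging to $\infty$. For $x\in E$, $g_n(x)$ is a point of $V(G^n)$ minimising $d_E(x,\cdot)$. Assumption (A1R): (a) there is $c_1>0$ with $d_{G^n}(x,y)\ge c_1\alpha(n)d_E(x,y)$ for all $x,y\in V(G^n)$, $n\ge1$, and a non-negative $\tilde\alpha(n)=o(\alpha(n))$ such that for each $r>0$ there are $c_2<\infty$, $n_0$ with $d_{G^n}(x,y)\le c_2\alpha(n)d_E(x,y)+\tilde\alpha(n)$ for all $x,y\in V(G^n)\cap B_E(\rho,r)$, $n\ge n_0$; (b) for each $r>0$, $\lim_n\sup_{x\in B_F(\rho,r)}d_E(x,V(G^n))=0$; (c) for every $x\in F$, $r,\varepsilon>0$, $\lim_n\mathbb{P}_\mu(|\beta(n)^{-1}\nu^n(B_E(x,r))-\nu(B_E(x,r))|>\varepsilon)=0$; (d) for every compact interval $I\subset(0,\infty)$, $x\in F$, $r,\varepsilon>0$, \[\lim_n\mathbb{P}_\mu\Big(\sup_{t\in I}\Big|\mathbf{P}^{G^n}_\rho(X^n_{\lfloor\gamma(n)t\rfloor}\in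 B_E(x,r))-\int_{B_E(x,r)}q_t(y)\nu(dy)\Big|>\varepsilon\Big)=0.\] Assumption (A2R): for every compact interval $I\subset(0,\infty)$ and $r,\varepsilon>0$, \[\lim_{\delta\to0}\limsup_{n\to\infty}\mathbb{P}_\mu\Big(\sup_{\substack{x,y\in B_{G^n}(\rho,\alpha(n)r):\\ d_{G^n}(x,y)\le\alpha(n)\delta}}\sup_{t\in I}\beta(n)\big|q^n_{\lfloor\gamma(n)t\rfloor}(x)-q^n_{\lfloor\gamma(n)t\rfloor}(y)\big|>\varepsilon\Big)=0.\] *)

theory Defs
  imports "HOL-Probability.Probability" "HOL-Library.Landau_Symbols"
begin

definition is_walk :: "'a set \<Rightarrow> ('a \<Rightarrow> 'a \<Rightarrow> bool) \<Rightarrow> 'a \<Rightarrow> 'a \<Rightarrow> 'a list \<Rightarrow> bool" where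
  "is_walk V Ed x y xs \<longleftrightarrow> xs \<noteq> [] \<and> hd xs = x \<and> last xs = y \<and> set xs \<subseteq> V \<and> successively Ed xs"

definition gdist :: "'a set \<Rightarrow> ('a \<Rightarrow> 'a \<Rightarrow> bool) \<Rightarrow> 'a \<Rightarrow> 'a \<Rightarrow> real" where
  "gdist V Ed x y = real (LEAST k. \<exists>xs. is_walk V Ed x y xs \<and> length xs = Suc k)"

definition gball :: "'a set \<Rightarrow> ('a \<Rightarrow> 'a \<Rightarrow> bool) \<Rightarrow> 'a \<Rightarrow> real \<Rightarrow> 'a set" where
  "gball V Ed x r = {y \<in> V. gdist V Ed x y < r}"

text \<open>Vertex weight mu_x = sum of mu_xy over the neighbours y of x
  (mu_xy = w x y on edges, 0 otherwise).\<close>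
definition vweight :: "('a \<Rightarrow> 'a \<Rightarrow> bool) \<Rightarrow> ('a \<Rightarrow> 'a \<Rightarrow> real) \<Rightarrow> 'a \<Rightarrow> real" where
  "vweight Ed w x = (\<Sum>y\<in>{y. Ed x y}. w x y)"

text \<open>walk_prob Ed w m x A = P_x(X_m \<in> A) for the discrete time random walk with
  transition probabilities P(x,y) = mu_xy / mu_x.\<close>
fun walk_prob :: "('a \<Rightarrow> 'a \<Rightarrow> bool) \<Rightarrow> ('a \<Rightarrow> 'a \<Rightarrow> real) \<Rightarrow> nat \<Rightarrow> 'a \<Rightarrow> 'a set \<Rightarrow> real" where
  "walk_prob Ed w 0 x A = indicator A x"
| "walk_prob Ed w (Suc m) x A =
     (\<Sum>z\<in>{z. Ed x z}. w x z / vweight Ed w x * walk_prob Ed w m z A)"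

definition hk_p :: "('a \<Rightarrow> 'a \<Rightarrow> bool) \<Rightarrow> ('a \<Rightarrow> 'a \<Rightarrow> real) \<Rightarrow> nat \<Rightarrow> 'a \<Rightarrow> 'a \<Rightarrow> real" where
  "hk_p Ed w m x y = walk_prob Ed w m x {y} / vweight Ed w y"

definition hk_q :: "('a \<Rightarrow> 'a \<Rightarrow> bool) \<Rightarrow> ('a \<Rightarrow> 'a \<Rightarrow> real) \<Rightarrow> nat \<Rightarrow> 'a \<Rightarrow> 'a \<Rightarrow> real" where
  "hk_q Ed w m x y = (hk_p Ed w m x y + hk_p Ed w (Suc m) x y) / 2"

text \<open>The measure nu^G(A) = sum_{x in A} mu_x (possibly infinite, hence ennreal).\<close>
definition gmeasure :: "'a set \<Rightarrow> ('a \<Rightarrow> 'a \<Rightarrow> bool) \<Rightarrow> ('a \<Rightarrow> 'a \<Rightarrow> real) \<Rightarrow> 'a set \<Rightarrow> ennreal" where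
  "gmeasure V Ed w A = (\<integral>\<^sup>+ x. ennreal (vweight Ed w x) * indicator A x \<partial>count_space V)"

end

theory Submission
  imports Defs
begin

text \<open>Cover the compact set \<open>F \<inter> cball \<rho> r\<close> by finitely many small balls \<open>B = ball z \<delta>\<close>.
  On such a ball, the averaged walk probability \<open>(P(X\<^sub>m \<in> B) + P(X\<^sub>m\<^sub>+\<^sub>1 \<in> B)) / 2\<close> equals
  \<open>\<Sum>\<^sub>y\<^sub>\<in>\<^sub>B q\<^sub>m(y) \<mu>\<^sub>y\<close>; by (A2R), with (A1R)(a) turning Euclidean into graph distances,
  \<open>\<beta>(n) q\<^sub>m\<close> is almost constant on \<open>B\<close>, so this sum is close to \<open>q\<^sub>m(g\<^sub>n(x)) \<nu>\<^sup>n(B)\<close>.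
  Comparing with (A1R)(c) for \<open>\<nu>\<^sup>n(B) / \<beta>(n) \<approx> \<nu>(B)\<close> and (A1R)(d) for the walk probabilities
  gives \<open>\<beta>(n) q\<^sub>m(g\<^sub>n(x)) \<approx> \<nu>(B)\<^sup>-\<^sup>1 \<integral>\<^sub>B q\<^sub>t d\<nu> \<approx> q\<^sub>t(x)\<close> by uniform continuity of \<open>q\<close>,
  outside an event whose probability is controlled by a union bound over the finitely many balls.\<close>

fun reach :: "('a \<Rightarrow> 'a \<Rightarrow> bool) \<Rightarrow> nat \<Rightarrow> 'a \<Rightarrow> 'a set" where
  "reach Ed 0 x = {x}"
| "reach Ed (Suc m) x = (\<Union>z\<in>{z. Ed x z}. reach Ed m z)"

lemma finite_reach:
  assumes "\<And>x. finite {y. Ed x y}"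
  shows "finite (reach Ed m x)"
  by (induction m arbitrary: x) (auto intro!: assms)

lemma reach_subset:
  assumes "\<And>x y. Ed x y \<Longrightarrow> y \<in> V" and "x \<in> V"
  shows "reach Ed m x \<subseteq> V"
  using assms(2) by (induction m arbitrary: x) (auto dest: assms(1))

lemma walk_imp_reach: "is_walk V Ed x y xs \<Longrightarrow> y \<in> reach Ed (length xs - 1) x"
proof (induction xs arbitrary: x)
  case Nil
  then show ?case by (simp add: is_walk_def)
next
  case (Cons u xs)
  show ?case
  proof (cases xs)
    case Nil
    with Cons.prems show ?thesis by (auto simp: is_walk_def)
  next
    case (Cons z zs)
    with Cons.prems have "Ed x z" "is_walk V Ed z y xs"
      by (auto simp: is_walk_def)
    with Cons.IH[of z] Cons show ?thesis by auto
  qed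
qed

lemma finite_gball:
  assumes fin: "\<And>x. finite {y. Ed x y}"
    and conn: "\<And>y. y \<in> V \<Longrightarrow> \<exists>xs. is_walk V Ed x y xs"
  shows "finite (gball V Ed x R)"
proof (rule finite_subset)
  show "finite (\<Union>k\<le>nat \<lceil>R\<rceil>. reach Ed k x)"
    by (intro finite_UN_I finite_atMost finite_reach fin)
  show "gball V Ed x R \<subseteq> (\<Union>k\<le>nat \<lceil>R\<rceil>. reach Ed k x)"
  proof
    fix y assume y: "y \<in> gball V Ed x R"
    define k where "k = (LEAST k. \<exists>xs. is_walk V Ed x y xs \<and> length xs = Suc k)"
    obtain xs where "is_walk V Ed x y xs"
      using y conn by (auto simp: gball_def)
    then have "\<exists>k xs. is_walk V Ed x y xs \<and> length xs = Suc k"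
      by (intro exI[of _ "length xs - 1"] exI[of _ xs]) (auto simp: is_walk_def)
    then have "\<exists>xs. is_walk V Ed x y xs \<and> length xs = Suc k"
      unfolding k_def by (rule LeastI_ex)
    then obtain ys where ys: "is_walk V Ed x y ys" "length ys = Suc k"
      by blast
    have "real k < R"
      using y by (simp add: gball_def gdist_def k_def)
    then have "k \<le> nat \<lceil>R\<rceil>" by linarith
    moreover have "y \<in> reach Ed k x"
      using walk_imp_reach[OF ys(1)] ys(2) by simp
    ultimately show "y \<in> (\<Union>k\<le>nat \<lceil>R\<rceil>. reach Ed k x)" by blast
  qed
qed

lemma countable_vertices:
  assumes fin: "\<And>x. finite {y. Ed x y}"
    and conn: "\<And>y. y \<in> V \<Longrightarrow> \<exists>xs. is_walk V Ed x y xs"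
  shows "countable V"
proof (rule countable_subset)
  show "V \<subseteq> (\<Union>k. reach Ed k x)"
  proof
    fix y assume "y \<in> V"
    then obtain xs where "is_walk V Ed x y xs"
      using conn by blast
    then have "y \<in> reach Ed (length xs - 1) x"
      by (rule walk_imp_reach)
    then show "y \<in> (\<Union>k. reach Ed k x)"
      by (rule UN_I[OF UNIV_I])
  qed
  show "countable (\<Union>k. reach Ed k x)"
    by (rule countable_UN[OF countableI_type]) (rule countable_finite[OF finite_reach[OF fin]])
qed

lemma walk_prob_singleton_eq_0: "y \<notin> reach Ed m x \<Longrightarrow> walk_prob Ed w m x {y} = 0"
  by (induction m arbitrary: x) (auto intro!: sum.neutral)

lemma walk_prob_eq_sum_reach:
  assumes fin: "\<And>x. finite {y. Ed x y}"
  shows "walk_prob Ed w m x A = (\<Sum>y\<in>reach Ed m x. walk_prob Ed w m x {y} * indicator A y)"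
proof (induction m arbitrary: x)
  case 0
  then show ?case by (simp add: indicator_def)
next
  case (Suc m)
  let ?R = "reach Ed (Suc m) x"
  have fR: "finite ?R"
    by (rule finite_reach[OF fin])
  have "walk_prob Ed w m z A = (\<Sum>y\<in>?R. walk_prob Ed w m z {y} * indicator A y)" if "Ed x z" for z
    unfolding Suc[of z] using that fR
    by (intro sum.mono_neutral_left) (auto simp: walk_prob_singleton_eq_0)
  then have "walk_prob Ed w (Suc m) x A =
      (\<Sum>z\<in>{z. Ed x z}. w x z / vweight Ed w x * (\<Sum>y\<in>?R. walk_prob Ed w m z {y} * indicator A y))"
    by simp
  also have "\<dots> = (\<Sum>y\<in>?R. (\<Sum>z\<in>{z. Ed x z}. w x z / vweight Ed w x * walk_prob Ed w m z {y}) * indicator A y)"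
    unfolding sum_distrib_left sum_distrib_right
    by (subst sum.swap) (simp add: mult.assoc)
  also have "\<dots> = (\<Sum>y\<in>?R. walk_prob Ed w (Suc m) x {y} * indicator A y)"
    by simp
  finally show ?case .
qed

lemma walk_prob_eq_sum:
  assumes fin: "\<And>x. finite {y. Ed x y}"
    and "finite T" "reach Ed m x \<inter> A \<subseteq> T" "T \<subseteq> A"
  shows "walk_prob Ed w m x A = (\<Sum>y\<in>T. walk_prob Ed w m x {y})"
proof -
  have "walk_prob Ed w m x A = (\<Sum>y\<in>reach Ed m x. walk_prob Ed w m x {y} * indicator A y)"
    by (rule walk_prob_eq_sum_reach[OF fin])
  also have "\<dots> = (\<Sum>y\<in>reach Ed m x \<inter> A. walk_prob Ed w m x {y})"
    using finite_reach[OF fin]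
    by (simp add: sum.inter_restrict indicator_def of_bool_def if_distrib cong: if_cong)
  also have "\<dots> = (\<Sum>y\<in>T. walk_prob Ed w m x {y})"
    using assms by (intro sum.mono_neutral_left) (auto intro!: walk_prob_singleton_eq_0)
  finally show ?thesis .
qed

lemma vweight_nonneg:
  assumes "\<And>y. Ed x y \<Longrightarrow> w x y > 0"
  shows "vweight Ed w x \<ge> 0"
  unfolding vweight_def using assms by (intro sum_nonneg) (auto intro: less_imp_le)

lemma vweight_pos_connected:
  assumes fin: "finite {y. Ed x y}" and w_pos: "\<And>y. Ed x y \<Longrightarrow> w x y > 0"
    and conn: "\<And>y. y \<in> V \<Longrightarrow> \<exists>xs. is_walk V Ed x y xs"
    and "z \<in> V" "z \<noteq> x"
  shows "vweight Ed w x > 0"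
proof -
  obtain xs where xs: "is_walk V Ed x z xs"
    using conn \<open>z \<in> V\<close> by blast
  then obtain u rest where "xs = x # u # rest"
    using \<open>z \<noteq> x\<close> by (cases xs; cases "tl xs") (auto simp: is_walk_def)
  with xs have "Ed x u" by (simp add: is_walk_def)
  then show ?thesis
    unfolding vweight_def using fin w_pos by (intro sum_pos2[of _ u]) (auto intro: less_imp_le)
qed

lemma walk_prob_nonneg:
  assumes "\<And>x y. Ed x y \<Longrightarrow> w x y > 0"
  shows "walk_prob Ed w m x A \<ge> 0"
proof (induction m arbitrary: x)
  case 0
  then show ?case by simp
next
  case (Suc m)
  have "vweight Ed w x \<ge> 0"
    using assms by (rule vweight_nonneg)
  moreover have "w x z \<ge> 0" if "Ed x z" for z
    using assms that by (simp add: less_imp_le)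
  ultimately show ?case
    using Suc.IH by (auto intro!: sum_nonneg mult_nonneg_nonneg divide_nonneg_nonneg)
qed

lemma hk_q_nonneg:
  assumes "\<And>x y. Ed x y \<Longrightarrow> w x y > 0"
  shows "hk_q Ed w m x y \<ge> 0"
  unfolding hk_q_def hk_p_def
  by (intro divide_nonneg_nonneg add_nonneg_nonneg walk_prob_nonneg[OF assms]
      vweight_nonneg[of Ed y w, OF assms]) simp_all

lemma gmeasure_ge_sum:
  assumes "finite T" "T \<subseteq> B \<inter> V" "\<And>y. y \<in> T \<Longrightarrow> vweight Ed w y \<ge> 0"
  shows "ennreal (\<Sum>y\<in>T. vweight Ed w y) \<le> gmeasure V Ed w B"
proof -
  have "ennreal (\<Sum>y\<in>T. vweight Ed w y) = (\<Sum>y\<in>T. ennreal (vweight Ed w y))"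
    using assms(3) by (simp add: sum_ennreal)
  also have "\<dots> = (\<integral>\<^sup>+ x. ennreal (vweight Ed w x) * indicator T x \<partial>count_space V)"
    using assms by (subst nn_integral_count_space'[of T]) auto
  also have "\<dots> \<le> gmeasure V Ed w B"
    unfolding gmeasure_def using assms by (intro nn_integral_mono) (auto simp: indicator_def)
  finally show ?thesis .
qed

lemma gmeasure_eq_sum:
  assumes "finite T" "T = B \<inter> V" "\<And>y. y \<in> T \<Longrightarrow> vweight Ed w y \<ge> 0"
  shows "gmeasure V Ed w B = ennreal (\<Sum>y\<in>T. vweight Ed w y)"
proof -
  have "gmeasure V Ed w B = (\<Sum>y\<in>T. ennreal (vweight Ed w y) * indicator B y)"
    unfolding gmeasure_def using assms by (intro nn_integral_count_space') (auto simp: indicator_def)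
  also have "\<dots> = (\<Sum>y\<in>T. ennreal (vweight Ed w y))"
    using assms(2) by (intro sum.cong) (auto simp: indicator_def)
  also have "\<dots> = ennreal (\<Sum>y\<in>T. vweight Ed w y)"
    using assms(3) by (rule sum_ennreal)
  finally show ?thesis .
qed

lemma average_walk_prob_eq_sum:
  assumes fin: "\<And>x. finite {y. Ed x y}"
    and T: "T = (reach Ed m x \<union> reach Ed (Suc m) x) \<inter> B"
    and vweight_T: "\<And>y. y \<in> T \<Longrightarrow> vweight Ed w y > 0"
  shows "(walk_prob Ed w m x B + walk_prob Ed w (Suc m) x B) / 2 =
    (\<Sum>y\<in>T. hk_q Ed w m x y * vweight Ed w y)"
proof -
  have "finite T"
    unfolding T by (intro finite_Int disjI1 finite_UnI finite_reach fin)
  then have "walk_prob Ed w k x B = (\<Sum>y\<in>T. walk_prob Ed w k x {y})" if "k = m \<or> k = Suc m" for k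
    using that T by (intro walk_prob_eq_sum[OF fin]) auto
  moreover have "(\<Sum>y\<in>T. hk_q Ed w m x y * vweight Ed w y) =
      (\<Sum>y\<in>T. (walk_prob Ed w m x {y} + walk_prob Ed w (Suc m) x {y}) / 2)"
  proof (rule sum.cong[OF refl])
    fix y assume "y \<in> T"
    then have "vweight Ed w y \<noteq> 0"
      using vweight_T by force
    then show "hk_q Ed w m x y * vweight Ed w y =
        (walk_prob Ed w m x {y} + walk_prob Ed w (Suc m) x {y}) / 2"
      by (simp add: hk_q_def hk_p_def field_simps del: walk_prob.simps)
  qed
  ultimately show ?thesis
    by (simp add: sum.distrib flip: sum_divide_distrib del: walk_prob.simps)
qed

lemma abs_weighted_sum_deviation_le:
  fixes Q \<mu> :: "'a \<Rightarrow> real"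
  assumes \<mu>: "\<And>y. y \<in> T \<Longrightarrow> \<mu> y \<ge> 0" and Q: "\<And>y. y \<in> T \<Longrightarrow> \<bar>Q y - c\<bar> \<le> e"
    and S: "(\<Sum>y\<in>T. \<mu> y) \<le> U" and "c \<ge> 0"
    and gap: "c * (U - (\<Sum>y\<in>T. \<mu> y)) \<le> e * (U - (\<Sum>y\<in>T. \<mu> y))"
  shows "\<bar>c * U - (\<Sum>y\<in>T. Q y * \<mu> y)\<bar> \<le> e * U"
proof -
  have "\<bar>\<Sum>y\<in>T. (c - Q y) * \<mu> y\<bar> \<le> (\<Sum>y\<in>T. e * \<mu> y)"
  proof (rule order.trans[OF sum_abs sum_mono])
    fix y assume "y \<in> T"
    then show "\<bar>(c - Q y) * \<mu> y\<bar> \<le> e * \<mu> y"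
      using Q[of y] \<mu>[of y] by (simp add: abs_mult abs_minus_commute mult_right_mono)
  qed
  moreover have "c * U - (\<Sum>y\<in>T. Q y * \<mu> y) = (\<Sum>y\<in>T. (c - Q y) * \<mu> y) + c * (U - (\<Sum>y\<in>T. \<mu> y))"
    by (simp add: algebra_simps sum_distrib_left sum_subtractf)
  moreover have "0 \<le> c * (U - (\<Sum>y\<in>T. \<mu> y))"
    using S \<open>c \<ge> 0\<close> by simp
  ultimately show ?thesis
    using gap by (simp add: sum_distrib_left[symmetric] algebra_simps)
qed

text \<open>Vertices of \<open>B\<close> outside the finite support \<open>T\<close> of the two walk distributions have
  \<open>q\<^sub>m(x, \<cdot>) = 0\<close>; if there are any, they force \<open>q\<^sub>m(x, v) \<le> e\<close>, which controls the part of
  \<open>\<nu>\<^sup>G(B)\<close> not seen by the walk.\<close>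

lemma hk_q_local_average:
  fixes w :: "'a \<Rightarrow> 'a \<Rightarrow> real"
  assumes fin: "\<And>x. finite {y. Ed x y}"
    and Ed_V: "\<And>x y. Ed x y \<Longrightarrow> y \<in> V"
    and w_pos: "\<And>x y. Ed x y \<Longrightarrow> w x y > 0"
    and vweight_V: "\<And>y. y \<in> V \<Longrightarrow> vweight Ed w y > 0"
    and "x \<in> V"
    and finite_B: "gmeasure V Ed w B \<noteq> \<top>"
    and close: "\<And>y. y \<in> B \<inter> V \<Longrightarrow> \<bar>hk_q Ed w m x y - hk_q Ed w m x v\<bar> \<le> e"
  shows "\<bar>hk_q Ed w m x v * enn2real (gmeasure V Ed w B)
           - (walk_prob Ed w m x B + walk_prob Ed w (Suc m) x B) / 2\<bar>
         \<le> e * enn2real (gmeasure V Ed w B)"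
proof -
  define U where "U = enn2real (gmeasure V Ed w B)"
  define T where "T = (reach Ed m x \<union> reach Ed (Suc m) x) \<inter> B"
  have "finite T"
    unfolding T_def by (intro finite_Int disjI1 finite_UnI finite_reach fin)
  have "reach Ed k x \<subseteq> V" for k
    using Ed_V \<open>x \<in> V\<close> by (rule reach_subset)
  then have "T \<subseteq> B \<inter> V"
    unfolding T_def by blast
  then have vweight_T: "\<And>y. y \<in> T \<Longrightarrow> vweight Ed w y \<ge> 0"
    using vweight_V by (auto intro: less_imp_le)
  have "ennreal (\<Sum>y\<in>T. vweight Ed w y) \<le> gmeasure V Ed w B"
    using \<open>finite T\<close> \<open>T \<subseteq> B \<inter> V\<close> vweight_T by (rule gmeasure_ge_sum)
  then have S_le: "(\<Sum>y\<in>T. vweight Ed w y) \<le> U"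
    unfolding U_def using finite_B vweight_T
    by (metis enn2real_ennreal enn2real_mono sum_nonneg top.not_eq_extremum)
  have "(\<Sum>y\<in>T. vweight Ed w y) \<ge> 0"
    using vweight_T by (rule sum_nonneg)
  have gap: "hk_q Ed w m x v * (U - (\<Sum>y\<in>T. vweight Ed w y)) \<le> e * (U - (\<Sum>y\<in>T. vweight Ed w y))"
  proof (cases "T = B \<inter> V")
    case True
    then show ?thesis
      using gmeasure_eq_sum[OF \<open>finite T\<close> True vweight_T] \<open>(\<Sum>y\<in>T. vweight Ed w y) \<ge> 0\<close>
      by (simp add: U_def)
  next
    case False
    then obtain y0 where y0: "y0 \<in> B \<inter> V" "y0 \<notin> T"
      using \<open>T \<subseteq> B \<inter> V\<close> by blast
    then have "hk_q Ed w m x y0 = 0"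
      by (auto simp: hk_q_def hk_p_def T_def walk_prob_singleton_eq_0)
    then have "hk_q Ed w m x v \<le> e"
      using close[OF y0(1)] by simp
    then show ?thesis
      using S_le by (intro mult_right_mono) auto
  qed
  have "\<bar>hk_q Ed w m x v * U - (\<Sum>y\<in>T. hk_q Ed w m x y * vweight Ed w y)\<bar> \<le> e * U"
  proof (rule abs_weighted_sum_deviation_le)
    show "\<bar>hk_q Ed w m x y - hk_q Ed w m x v\<bar> \<le> e" if "y \<in> T" for y
      using close that \<open>T \<subseteq> B \<inter> V\<close> by blast
  qed (use vweight_T S_le hk_q_nonneg[of Ed w, OF w_pos] gap in auto)
  moreover have "(walk_prob Ed w m x B + walk_prob Ed w (Suc m) x B) / 2
      = (\<Sum>y\<in>T. hk_q Ed w m x y * vweight Ed w y)"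
    using vweight_V \<open>T \<subseteq> B \<inter> V\<close> by (intro average_walk_prob_eq_sum[OF fin T_def]) auto
  ultimately show ?thesis
    by (simp add: U_def)
qed

lemma measurable_vweight:
  assumes "\<And>x y. (\<lambda>\<omega>. w \<omega> x y) \<in> borel_measurable M"
  shows "(\<lambda>\<omega>. vweight Ed (w \<omega>) x) \<in> borel_measurable M"
  unfolding vweight_def using assms by measurable

lemma measurable_walk_prob:
  assumes [measurable]: "\<And>x y. (\<lambda>\<omega>. w \<omega> x y) \<in> borel_measurable M"
  shows "(\<lambda>\<omega>. walk_prob Ed (w \<omega>) m x A) \<in> borel_measurable M"
proof (induction m arbitrary: x)
  case 0
  then show ?case by simp
next
  case (Suc m)
  have [measurable]: "(\<lambda>\<omega>. vweight Ed (w \<omega>) x) \<in> borel_measurable M"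
    by (rule measurable_vweight[OF assms])
  have [measurable]: "\<And>z. (\<lambda>\<omega>. walk_prob Ed (w \<omega>) m z A) \<in> borel_measurable M"
    by (rule Suc)
  show ?case by simp measurable
qed

lemma measurable_hk_q:
  assumes "\<And>x y. (\<lambda>\<omega>. w \<omega> x y) \<in> borel_measurable M"
  shows "(\<lambda>\<omega>. hk_q Ed (w \<omega>) m x y) \<in> borel_measurable M"
proof -
  have [measurable]: "\<And>m. (\<lambda>\<omega>. walk_prob Ed (w \<omega>) m x {y}) \<in> borel_measurable M"
    "(\<lambda>\<omega>. vweight Ed (w \<omega>) y) \<in> borel_measurable M"
    using assms by (rule measurable_walk_prob, rule measurable_vweight)
  show ?thesis
    unfolding hk_q_def hk_p_def by measurable
qed

lemma measurable_gmeasure: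
  assumes "countable V" and "\<And>x y. (\<lambda>\<omega>. w \<omega> x y) \<in> borel_measurable M"
  shows "(\<lambda>\<omega>. gmeasure V Ed (w \<omega>) B) \<in> borel_measurable M"
proof -
  interpret sigma_finite_measure "count_space V"
    by (rule sigma_finite_measure_count_space_countable[OF assms(1)])
  have "(\<lambda>(x, \<omega>). ennreal (vweight Ed (w \<omega>) x) * indicator B x)
      \<in> borel_measurable (count_space V \<Otimes>\<^sub>M M)"
  proof (rule measurable_pair_measure_countable1[OF assms(1)])
    fix x
    have [measurable]: "(\<lambda>\<omega>. vweight Ed (w \<omega>) x) \<in> borel_measurable M"
      by (rule measurable_vweight[OF assms(2)])
    show "(\<lambda>\<omega>. case (x, \<omega>) of (x, \<omega>) \<Rightarrow> ennreal (vweight Ed (w \<omega>) x) * indicator B x)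
        \<in> borel_measurable M"
      by simp
  qed
  then have "(\<lambda>(\<omega>, x). ennreal (vweight Ed (w \<omega>) x) * indicator B x)
      \<in> borel_measurable (M \<Otimes>\<^sub>M count_space V)"
    by (subst measurable_pair_swap_iff) simp
  then show ?thesis
    unfolding gmeasure_def
    by (rule borel_measurable_nn_integral[where f="\<lambda>\<omega> x. ennreal (vweight Ed (w \<omega>) x) * indicator B x", simplified])
qed

lemma sets_Collect_bex_finite_image:
  fixes f :: "nat \<Rightarrow> 'w \<Rightarrow> real" and h :: "real \<Rightarrow> nat"
  assumes "\<And>k. f k \<in> borel_measurable M" and "finite (h ` T)"
    and "\<And>t. t \<in> T \<Longrightarrow> open {p. P t p}"
  shows "{\<omega> \<in> space M. \<exists>t\<in>T. P t (f (h t) \<omega>)} \<in> sets M"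
proof -
  have "{\<omega> \<in> space M. \<exists>t\<in>T. P t (f (h t) \<omega>)} =
      (\<Union>k\<in>h ` T. f k -` (\<Union>t\<in>{t\<in>T. h t = k}. {p. P t p}) \<inter> space M)"
    (is "?L = ?R")
  proof
    show "?L \<subseteq> ?R" by blast
    show "?R \<subseteq> ?L" by (auto, metis)
  qed
  moreover have "f k -` (\<Union>t\<in>{t\<in>T. h t = k}. {p. P t p}) \<inter> space M \<in> sets M" for k
    using assms by (intro measurable_sets[OF assms(1)] borel_open open_UN) auto
  then have "?R \<in> sets M"
    using assms(2) by (intro sets.finite_UN)
  ultimately show ?thesis
    by (simp only:)
qed

lemma finite_image_nat_floor:
  assumes "(c::real) \<ge> 0"
  shows "finite ((\<lambda>t. nat \<lfloor>c * t\<rfloor>) ` {a..b})"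
proof (rule finite_subset)
  show "(\<lambda>t. nat \<lfloor>c * t\<rfloor>) ` {a..b} \<subseteq> {..nat \<lceil>c * b\<rceil>}"
  proof
    fix k assume "k \<in> (\<lambda>t. nat \<lfloor>c * t\<rfloor>) ` {a..b}"
    then obtain t where t: "t \<in> {a..b}" "k = nat \<lfloor>c * t\<rfloor>" by blast
    have "c * t \<le> c * b"
      using t assms by (auto intro: mult_left_mono)
    then show "k \<in> {..nat \<lceil>c * b\<rceil>}"
      using t by (auto simp: nat_le_iff) linarith
  qed
qed simp

lemma nat_floor_add_inverse:
  fixes c t :: real
  assumes "c > 0" "t \<ge> 0"
  shows "nat \<lfloor>c * (t + 1 / c)\<rfloor> = Suc (nat \<lfloor>c * t\<rfloor>)"
proof -
  have "c * (t + 1 / c) = c * t + 1"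
    using assms by (simp add: field_simps)
  moreover have "\<lfloor>c * t\<rfloor> \<ge> 0"
    using assms by simp
  ultimately show ?thesis
    by (simp add: nat_add_distrib)
qed

lemma (in finite_measure) measure_le_sum_of_cover:
  assumes "A \<subseteq> B \<union> (\<Union>z\<in>Z. C z \<union> D z)" "finite Z" "B \<in> sets M"
    and "\<And>z. z \<in> Z \<Longrightarrow> C z \<in> sets M" "\<And>z. z \<in> Z \<Longrightarrow> D z \<in> sets M"
  shows "measure M A \<le> measure M B + (\<Sum>z\<in>Z. measure M (C z) + measure M (D z))"
proof -
  have "(\<Union>z\<in>Z. C z \<union> D z) \<in> sets M"
    using assms by (intro sets.finite_UN sets.Un) auto
  then have "measure M A \<le> measure M (B \<union> (\<Union>z\<in>Z. C z \<union> D z))"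
    using assms by (intro finite_measure_mono) auto
  also have "\<dots> \<le> measure M B + measure M (\<Union>z\<in>Z. C z \<union> D z)"
    using assms by (intro measure_subadditive) (auto simp: emeasure_eq_measure)
  also have "measure M (\<Union>z\<in>Z. C z \<union> D z) \<le> (\<Sum>z\<in>Z. measure M (C z \<union> D z))"
    using assms by (intro finite_measure_subadditive_finite) auto
  also have "\<dots> \<le> (\<Sum>z\<in>Z. measure M (C z) + measure M (D z))"
    using assms by (intro sum_mono measure_subadditive) (auto simp: emeasure_eq_measure)
  finally show ?thesis by simp
qed

lemma emeasure_compact_less_top:
  assumes "compact K" "K \<subseteq> F" "sets N = sets borel"
    and locally_finite: "\<And>x. x \<in> F \<Longrightarrow> \<exists>e>0. emeasure N (ball x e) < \<infinity>"
  shows "emeasure N K < \<infinity>"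
proof -
  have "\<forall>x\<in>K. \<exists>e. e > 0 \<and> emeasure N (ball x e) < \<infinity>"
    using locally_finite \<open>K \<subseteq> F\<close> by blast
  from bchoice[OF this] obtain e where e: "\<And>x. x \<in> K \<Longrightarrow> e x > 0 \<and> emeasure N (ball x (e x)) < \<infinity>"
    by blast
  then have "K \<subseteq> (\<Union>x\<in>K. ball x (e x))"
    by force
  then obtain D where D: "D \<subseteq> K" "finite D" "K \<subseteq> (\<Union>x\<in>D. ball x (e x))"
    using compactE_image[OF \<open>compact K\<close>, of K "\<lambda>x. ball x (e x)"] by blast
  have "emeasure N K \<le> emeasure N (\<Union>x\<in>D. ball x (e x))"
    using D(3) assms(3) by (intro emeasure_mono) (auto intro!: sets.finite_UN[OF D(2)])
  also have "\<dots> \<le> (\<Sum>x\<in>D. emeasure N (ball x (e x)))"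
    using D(2) by (rule emeasure_subadditive_finite) (auto simp: assms(3))
  also have "\<dots> < \<infinity>"
    using D e by (simp add: ennreal_sum_less_top subset_eq)
  finally show ?thesis .
qed

lemma uniform_modulus_on_compact:
  fixes q :: "real \<Rightarrow> 'e::metric_space \<Rightarrow> real"
  assumes "compact K" and cont: "continuous_on ({a..b} \<times> K) (\<lambda>(t, x). q t x)" and "e > 0"
  obtains d where "d > 0"
    and "\<And>t t' x y. t \<in> {a..b} \<Longrightarrow> t' \<in> {a..b} \<Longrightarrow> x \<in> K \<Longrightarrow> y \<in> K \<Longrightarrow>
           \<bar>t - t'\<bar> < d \<Longrightarrow> dist x y < d \<Longrightarrow> \<bar>q t x - q t' y\<bar> < e"
proof -
  have "uniformly_continuous_on ({a..b} \<times> K) (\<lambda>(t, x). q t x)"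
    using assms by (intro compact_uniformly_continuous cont compact_Times) auto
  then obtain d where "d > 0" and d: "\<And>p p'. p \<in> {a..b} \<times> K \<Longrightarrow> p' \<in> {a..b} \<times> K \<Longrightarrow>
      dist p' p < d \<Longrightarrow> dist ((\<lambda>(t, x). q t x) p') ((\<lambda>(t, x). q t x) p) < e"
    unfolding uniformly_continuous_on_def using \<open>e > 0\<close> by metis
  show thesis
  proof (rule that[of "d / 2"])
    fix t t' x y
    assume "t \<in> {a..b}" "t' \<in> {a..b}" "x \<in> K" "y \<in> K" "\<bar>t - t'\<bar> < d / 2" "dist x y < d / 2"
    moreover have "dist (t', y) (t, x) < d"
      unfolding dist_Pair_Pair using \<open>\<bar>t - t'\<bar> < d / 2\<close> \<open>dist x y < d / 2\<close>
      by (intro sqrt_sum_squares_half_less) (auto simp: dist_real_def dist_commute abs_minus_commute)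
    ultimately show "\<bar>q t x - q t' y\<bar> < e"
      using d[of "(t, x)" "(t', y)"] by (simp add: dist_real_def abs_minus_commute)
  qed (use \<open>d > 0\<close> in simp)
qed

lemma bound_on_compact:
  fixes q :: "real \<Rightarrow> 'e::metric_space \<Rightarrow> real"
  assumes "compact K" and cont: "continuous_on ({a..b} \<times> K) (\<lambda>(t, x). q t x)"
  obtains Q where "Q \<ge> 0" and "\<And>t x. t \<in> {a..b} \<Longrightarrow> x \<in> K \<Longrightarrow> \<bar>q t x\<bar> \<le> Q"
proof -
  have "compact ((\<lambda>(t, x). q t x) ` ({a..b} \<times> K))"
    using assms by (intro compact_continuous_image compact_Times) auto
  then obtain B where B: "\<And>y. y \<in> (\<lambda>(t, x). q t x) ` ({a..b} \<times> K) \<Longrightarrow> norm y \<le> B"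
    using compact_imp_bounded bounded_iff by metis
  show thesis
  proof (rule that[of "max B 0"])
    fix t x assume "t \<in> {a..b}" "x \<in> K"
    then have "norm (q t x) \<le> B"
      by (intro B) auto
    then show "\<bar>q t x\<bar> \<le> max B 0" by simp
  qed simp
qed

lemma set_integrable_const:
  assumes "A \<in> sets M" "emeasure M A < \<infinity>"
  shows "set_integrable M A (\<lambda>_. c::real)"
  unfolding set_integrable_def
  using integrable_real_indicator[OF assms] by (intro integrable_scaleR_left) simp

lemma set_integral_diff_le:
  fixes f g :: "'a \<Rightarrow> real"
  assumes A: "A \<in> sets M" "emeasure M A < \<infinity>"
    and f: "set_integrable M A f" and g: "set_integrable M A g"
    and le: "\<And>x. x \<in> A \<Longrightarrow> \<bar>f x - g x\<bar> \<le> c"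
  shows "\<bar>(LINT x:A|M. f x) - (LINT x:A|M. g x)\<bar> \<le> c * measure M A"
proof -
  have "(LINT x:A|M. c) = c * measure M A"
    using A by (simp add: set_integral_const)
  moreover have "(LINT x:A|M. f x - g x) \<le> (LINT x:A|M. c)"
    using f g le set_integrable_const[OF A] by (intro set_integral_mono) (auto simp: abs_le_iff)
  moreover have "(LINT x:A|M. g x - f x) \<le> (LINT x:A|M. c)"
    using f g le set_integrable_const[OF A] by (intro set_integral_mono) (auto simp: abs_le_iff)
  moreover have "(LINT x:A|M. f x - g x) = (LINT x:A|M. f x) - (LINT x:A|M. g x)"
    "(LINT x:A|M. g x - f x) = (LINT x:A|M. g x) - (LINT x:A|M. f x)"
    using f g by simp_all
  ultimately show ?thesis
    unfolding abs_le_iff by linarith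
qed

lemma set_integral_average_close:
  fixes f :: "'a \<Rightarrow> real"
  assumes A: "A \<in> sets M" "emeasure M A < \<infinity>" "measure M A > 0"
    and f: "set_integrable M A f"
    and le: "\<And>x. x \<in> A \<Longrightarrow> \<bar>f x - c\<bar> \<le> e"
  shows "\<bar>(LINT x:A|M. f x) / measure M A - c\<bar> \<le> e"
proof -
  have "\<bar>(LINT x:A|M. f x) - (LINT x:A|M. c)\<bar> \<le> e * measure M A"
    using A(1,2) f set_integrable_const[OF A(1,2)] le by (rule set_integral_diff_le)
  moreover have "(LINT x:A|M. c) = c * measure M A"
    using A by (simp add: set_integral_const)
  ultimately have "\<bar>(LINT x:A|M. f x) - c * measure M A\<bar> \<le> e * measure M A"
    by simp
  moreover have "(LINT x:A|M. f x) / measure M A - c = ((LINT x:A|M. f x) - c * measure M A) / measure M A"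
    using A(3) by (simp add: field_simps)
  ultimately show ?thesis
    using A(3) by (simp add: abs_divide pos_divide_le_eq)
qed

lemma abs_midpoint_diff_le:
  fixes u v x y c :: real
  assumes "\<bar>u - x\<bar> \<le> c / 2" "\<bar>v - y\<bar> \<le> c / 2" "\<bar>y - x\<bar> \<le> c"
  shows "\<bar>(u + v) / 2 - x\<bar> \<le> c"
proof -
  have "(u + v) / 2 - x = ((u - x) + (v - y) + (y - x)) / 2"
    by (simp add: field_simps)
  also have "\<bar>\<dots>\<bar> \<le> (\<bar>u - x\<bar> + \<bar>v - y\<bar> + \<bar>y - x\<bar>) / 2"
    by (simp add: divide_right_mono abs_triangle_ineq order.trans[OF abs_triangle_ineq add_mono])
  also have "\<dots> \<le> c"
    using assms by simp
  finally show ?thesis .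
qed

text \<open>The chain \<open>X \<approx> W / N \<approx> I / N \<approx> I / \<nu> \<approx> q\<close>: here \<open>X\<close> is the rescaled kernel at a vertex,
  \<open>N\<close> the rescaled graph volume and \<open>W\<close> the averaged walk probability of a ball, \<open>\<nu>\<close> its
  limiting volume and \<open>I\<close> the integral of the limiting kernel over it.\<close>

lemma ratio_chain_estimate:
  fixes X N W I \<nu> Q q e :: real
  assumes "\<nu> > 0" "e > 0" "Q \<ge> 0"
    and XN: "\<bar>X * N - W\<bar> \<le> e / 10 * N"
    and WI: "\<bar>W - I\<bar> \<le> e / 10 * \<nu>"
    and N: "\<bar>N - \<nu>\<bar> \<le> \<nu> / 2" "\<bar>N - \<nu>\<bar> \<le> e / (20 * (Q + 1)) * \<nu>"
    and I: "0 \<le> I" "I \<le> Q * \<nu>"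
    and Iq: "\<bar>I / \<nu> - q\<bar> \<le> e / 10"
  shows "\<bar>X - q\<bar> < e"
proof -
  have "N \<ge> \<nu> / 2"
    using N(1) by linarith
  then have "N > 0"
    using \<open>\<nu> > 0\<close> by linarith
  have "\<bar>X - W / N\<bar> = \<bar>X * N - W\<bar> / N"
    using \<open>N > 0\<close> by (simp add: field_simps)
  also have "\<dots> \<le> e / 10"
    using XN \<open>N > 0\<close> by (simp add: divide_le_eq)
  finally have XW: "\<bar>X - W / N\<bar> \<le> e / 10" .
  have "\<bar>W / N - I / N\<bar> = \<bar>W - I\<bar> / N"
    using \<open>N > 0\<close> by (simp add: field_simps)
  also have "\<dots> \<le> (e / 10 * \<nu>) / (\<nu> / 2)"
    using WI \<open>N \<ge> \<nu> / 2\<close> \<open>\<nu> > 0\<close> \<open>e > 0\<close> by (intro frac_le) auto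
  also have "\<dots> = e / 5"
    using \<open>\<nu> > 0\<close> by simp
  finally have WI': "\<bar>W / N - I / N\<bar> \<le> e / 5" .
  have "Q + 1 > 0"
    using \<open>Q \<ge> 0\<close> by simp
  have scale: "\<nu> > 0 \<Longrightarrow> (Q * \<nu>) * (c * \<nu>) / ((\<nu> / 2) * \<nu>) = 2 * Q * c" for c
    by (simp add: field_simps)
  have "I / N - I / \<nu> = I * (\<nu> - N) / (N * \<nu>)"
    using \<open>N > 0\<close> \<open>\<nu> > 0\<close> by (simp add: field_simps)
  then have "\<bar>I / N - I / \<nu>\<bar> = I * \<bar>N - \<nu>\<bar> / (N * \<nu>)"
    using \<open>N > 0\<close> \<open>\<nu> > 0\<close> I(1) by (simp add: abs_mult abs_divide abs_minus_commute)
  also have "\<dots> \<le> (Q * \<nu>) * (e / (20 * (Q + 1)) * \<nu>) / ((\<nu> / 2) * \<nu>)"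
    using I N(2) \<open>N \<ge> \<nu> / 2\<close> \<open>\<nu> > 0\<close> \<open>Q \<ge> 0\<close> \<open>e > 0\<close>
    by (intro frac_le mult_mono mult_pos_pos mult_nonneg_nonneg mult_right_mono) auto
  also have "\<dots> = 2 * Q * (e / (20 * (Q + 1)))"
    using \<open>\<nu> > 0\<close> by (rule scale)
  also have "\<dots> = e / 10 * (Q / (Q + 1))"
    using \<open>Q + 1 > 0\<close> by (simp add: field_simps)
  also have "\<dots> \<le> e / 10"
    using \<open>Q + 1 > 0\<close> \<open>e > 0\<close> by (intro mult_left_le) (auto simp: divide_le_eq_1)
  finally have II: "\<bar>I / N - I / \<nu>\<bar> \<le> e / 10" .
  have "\<bar>X - q\<bar> \<le> \<bar>X - W / N\<bar> + \<bar>W / N - I / N\<bar> + \<bar>I / N - I / \<nu>\<bar> + \<bar>I / \<nu> - q\<bar>"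
    by linarith
  then show ?thesis
    using XW WI' II Iq \<open>e > 0\<close> by linarith
qed

locale heat_kernel_local_limit = prob_space M for M :: "'w measure" +
  fixes F :: "'e::metric_space set" and \<nu> :: "'e measure" and \<rho> :: 'e
    and q :: "real \<Rightarrow> 'e \<Rightarrow> real"
    and V :: "nat \<Rightarrow> 'e set" and Ed :: "nat \<Rightarrow> 'e \<Rightarrow> 'e \<Rightarrow> bool"
    and w :: "'w \<Rightarrow> 'e \<Rightarrow> 'e \<Rightarrow> real"
    and \<alpha> \<beta> \<gamma> :: "nat \<Rightarrow> real" and g :: "nat \<Rightarrow> 'e \<Rightarrow> 'e"
    and a b r \<epsilon> :: real
  assumes F_compact: "\<And>x s. s > 0 \<Longrightarrow> compact (F \<inter> cball x s)"
    and nu_sets: "sets \<nu> = sets borel"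
    and nu_F: "emeasure \<nu> (UNIV - F) = 0"
    and nu_locfin: "\<And>x. x \<in> F \<Longrightarrow> \<exists>e>0. emeasure \<nu> (ball x e) < \<infinity>"
    and nu_full_support: "\<And>x s. x \<in> F \<Longrightarrow> s > 0 \<Longrightarrow> emeasure \<nu> (F \<inter> ball x s) > 0"
    and q_cont: "continuous_on ({0<..} \<times> F) (\<lambda>(t, x). q t x)"
    and q_nonneg: "\<And>t x. t > 0 \<Longrightarrow> x \<in> F \<Longrightarrow> q t x \<ge> 0"
    and q_integrable: "\<And>t. t > 0 \<Longrightarrow> set_integrable \<nu> F (q t)"
    and Ed_V: "\<And>n x y. n \<ge> 1 \<Longrightarrow> Ed n x y \<Longrightarrow> x \<in> V n \<and> y \<in> V n"
    and loc_fin: "\<And>n x. n \<ge> 1 \<Longrightarrow> x \<in> V n \<Longrightarrow> finite {y. Ed n x y}"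
    and connected: "\<And>n x y. n \<ge> 1 \<Longrightarrow> x \<in> V n \<Longrightarrow> y \<in> V n \<Longrightarrow>
          \<exists>xs. is_walk (V n) (Ed n) x y xs"
    and two_vertices: "\<And>n. n \<ge> 1 \<Longrightarrow> \<exists>x\<in>V n. \<exists>y\<in>V n. x \<noteq> y"
    and rho_V: "\<And>n. n \<ge> 1 \<Longrightarrow> \<rho> \<in> V n"
    and w_meas: "\<And>x y. (\<lambda>\<omega>. w \<omega> x y) \<in> borel_measurable M"
    and w_pos: "\<And>\<omega> n x y. \<omega> \<in> space M \<Longrightarrow> n \<ge> 1 \<Longrightarrow> Ed n x y \<Longrightarrow> w \<omega> x y > 0"
    and alpha_nonneg: "\<And>n. \<alpha> n \<ge> 0"
    and gamma_nonneg: "\<And>n. \<gamma> n \<ge> 0"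
    and alpha_lim: "filterlim \<alpha> at_top sequentially"
    and beta_lim: "filterlim \<beta> at_top sequentially"
    and gamma_lim: "filterlim \<gamma> at_top sequentially"
    and g_V: "\<And>n x. n \<ge> 1 \<Longrightarrow> g n x \<in> V n"
    and g_min: "\<And>n x y. n \<ge> 1 \<Longrightarrow> y \<in> V n \<Longrightarrow> dist x (g n x) \<le> dist x y"
    and A1R_a2: "\<exists>\<alpha>' :: nat \<Rightarrow> real. (\<forall>n. \<alpha>' n \<ge> 0) \<and> \<alpha>' \<in> o(\<alpha>) \<and>
          (\<forall>s>0. \<exists>c2 n0. \<forall>n\<ge>n0. \<forall>x\<in>V n \<inter> ball \<rho> s. \<forall>y\<in>V n \<inter> ball \<rho> s.
             gdist (V n) (Ed n) x y \<le> c2 * \<alpha> n * dist x y + \<alpha>' n)"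
    and A1R_b: "\<And>s. s > 0 \<Longrightarrow>
          (\<lambda>n. SUP x \<in> F \<inter> ball \<rho> s. ereal (infdist x (V n))) \<longlonglongrightarrow> 0"
    and A1R_c: "\<And>x s e. x \<in> F \<Longrightarrow> s > 0 \<Longrightarrow> e > 0 \<Longrightarrow>
          (\<lambda>n. measure M {\<omega> \<in> space M.
              gmeasure (V n) (Ed n) (w \<omega>) (ball x s) = \<top> \<or>
              \<bar>enn2real (gmeasure (V n) (Ed n) (w \<omega>) (ball x s)) / \<beta> n
                 - measure \<nu> (ball x s)\<bar> > e}) \<longlonglongrightarrow> 0"
    and A1R_d: "\<And>a' b' x s e. 0 < a' \<Longrightarrow> a' \<le> b' \<Longrightarrow> x \<in> F \<Longrightarrow> s > 0 \<Longrightarrow> e > 0 \<Longrightarrow>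
          (\<lambda>n. measure M {\<omega> \<in> space M. \<exists>t\<in>{a'..b'}.
              \<bar>walk_prob (Ed n) (w \<omega>) (nat \<lfloor>\<gamma> n * t\<rfloor>) \<rho> (ball x s)
                 - (LINT y:(ball x s \<inter> F)|\<nu>. q t y)\<bar> > e}) \<longlonglongrightarrow> 0"
    and A2R: "\<And>a' b' s e. 0 < a' \<Longrightarrow> a' \<le> b' \<Longrightarrow> s > 0 \<Longrightarrow> e > 0 \<Longrightarrow>
          ((\<lambda>\<delta>. limsup (\<lambda>n. ereal (measure M {\<omega> \<in> space M.
              \<exists>x\<in>gball (V n) (Ed n) \<rho> (\<alpha> n * s). \<exists>y\<in>gball (V n) (Ed n) \<rho> (\<alpha> n * s).
                gdist (V n) (Ed n) x y \<le> \<alpha> n * \<delta> \<and>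
                (\<exists>t\<in>{a'..b'}. \<beta> n * \<bar>hk_q (Ed n) (w \<omega>) (nat \<lfloor>\<gamma> n * t\<rfloor>) \<rho> x
                    - hk_q (Ed n) (w \<omega>) (nat \<lfloor>\<gamma> n * t\<rfloor>) \<rho> y\<bar> > e)})))
           \<longlongrightarrow> 0) (at_right 0)"
    and a_pos: "0 < a" and ab: "a \<le> b" and r_pos: "r > 0" and eps_pos: "\<epsilon> > 0"
begin

lemma finite_neighbours:
  assumes "n \<ge> 1"
  shows "finite {y. Ed n x y}"
proof (cases "x \<in> V n")
  case True
  then show ?thesis using loc_fin[OF assms] by blast
next
  case False
  then have "{y. Ed n x y} = {}"
    using Ed_V[OF assms] by blast
  then show ?thesis by simp
qed

lemma vweight_positive:
  assumes "n \<ge> 1" "\<omega> \<in> space M" "y \<in> V n"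
  shows "vweight (Ed n) (w \<omega>) y > 0"
proof -
  obtain z where "z \<in> V n" "z \<noteq> y"
    using two_vertices[OF assms(1)] by blast
  then show ?thesis
    using assms finite_neighbours w_pos connected by (intro vweight_pos_connected[where V = "V n"]) auto
qed

lemma measurable_gmeasure_graph:
  assumes "n \<ge> 1"
  shows "(\<lambda>\<omega>. gmeasure (V n) (Ed n) (w \<omega>) B) \<in> borel_measurable M"
proof (rule measurable_gmeasure[OF _ w_meas])
  show "countable (V n)"
    by (rule countable_vertices[where Ed = "Ed n" and x = \<rho>])
      (use assms finite_neighbours connected rho_V in auto)
qed

lemma closed_F: "closed F"
  unfolding closed_def open_dist
proof (intro ballI)
  fix x assume "x \<in> - F"
  have "closed (F \<inter> cball x 1)"
    using F_compact[of 1 x] by (simp add: compact_imp_closed)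
  moreover have "x \<notin> F \<inter> cball x 1"
    using \<open>x \<in> - F\<close> by blast
  ultimately obtain e where e: "e > 0" "ball x e \<subseteq> - (F \<inter> cball x 1)"
    using open_contains_ball[of "- (F \<inter> cball x 1)"] by (auto simp: closed_def)
  show "\<exists>e>0. \<forall>y. dist y x < e \<longrightarrow> y \<in> - F"
  proof (intro exI[of _ "min e 1"] conjI allI impI)
    fix y assume "dist y x < min e 1"
    then have "y \<in> ball x e" "y \<in> cball x 1"
      by (auto simp: dist_commute)
    then show "y \<in> - F"
      using e by auto
  qed (use e in simp)
qed

lemma emeasure_Int_F:
  assumes "A \<in> sets \<nu>"
  shows "emeasure \<nu> (A \<inter> F) = emeasure \<nu> A"
proof -
  have "UNIV - F \<in> null_sets \<nu>"
    using nu_F closed_F nu_sets sets_eq_imp_space_eq[OF nu_sets] by (auto simp: null_sets_def)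
  then have "A - F \<in> null_sets \<nu>"
    by (rule null_sets_subset) (use assms closed_F nu_sets in auto)
  then have "emeasure \<nu> ((A \<inter> F) \<union> (A - F)) = emeasure \<nu> (A \<inter> F)"
    using assms closed_F nu_sets by (intro emeasure_Un_null_set) auto
  moreover have "(A \<inter> F) \<union> (A - F) = A" by blast
  ultimately show ?thesis by simp
qed

lemma emeasure_ball_less_top: "emeasure \<nu> (ball z s) < \<infinity>"
proof (cases "s > 0")
  case True
  have "emeasure \<nu> (F \<inter> cball z s) < \<infinity>"
    using F_compact[OF True] nu_sets nu_locfin by (intro emeasure_compact_less_top) auto
  moreover have "emeasure \<nu> (ball z s \<inter> F) \<le> emeasure \<nu> (F \<inter> cball z s)"
    using F_compact[OF True] nu_sets by (intro emeasure_mono) (auto simp: compact_imp_closed)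
  ultimately show ?thesis
    using emeasure_Int_F[of "ball z s"] nu_sets by simp
qed (simp add: not_less ball_empty)

lemma measure_ball_pos:
  assumes "z \<in> F" "s > 0"
  shows "measure \<nu> (ball z s) > 0"
proof -
  have "emeasure \<nu> (ball z s) > 0"
    using nu_full_support[OF assms] emeasure_Int_F[of "ball z s"] nu_sets by (simp add: Int_commute)
  then show ?thesis
    using emeasure_ball_less_top[of z s] by (simp add: measure_def enn2real_positive_iff)
qed

text \<open>\<open>osc_event\<close>, \<open>volume_event\<close> and \<open>walk_event\<close> are the events controlled by (A2R),
  (A1R)(c) and (A1R)(d); the last two with thresholds relative to \<open>\<nu>(ball z \<delta>)\<close>, and
  \<open>walk_event\<close> on \<open>[a, b + 1]\<close> to accommodate the shifted time \<open>t + 1/\<gamma>(n)\<close>.\<close>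

definition bad_event :: "nat \<Rightarrow> 'w set" where
  "bad_event n = {\<omega> \<in> space M. \<exists>x \<in> F \<inter> ball \<rho> r. \<exists>t\<in>{a..b}.
      \<bar>\<beta> n * hk_q (Ed n) (w \<omega>) (nat \<lfloor>\<gamma> n * t\<rfloor>) \<rho> (g n x) - q t x\<bar> > \<epsilon>}"

definition osc_event :: "real \<Rightarrow> real \<Rightarrow> nat \<Rightarrow> 'w set" where
  "osc_event s \<delta> n = {\<omega> \<in> space M.
      \<exists>x\<in>gball (V n) (Ed n) \<rho> (\<alpha> n * s). \<exists>y\<in>gball (V n) (Ed n) \<rho> (\<alpha> n * s).
        gdist (V n) (Ed n) x y \<le> \<alpha> n * \<delta> \<and>
        (\<exists>t\<in>{a..b}. \<beta> n * \<bar>hk_q (Ed n) (w \<omega>) (nat \<lfloor>\<gamma> n * t\<rfloor>) \<rho> x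
            - hk_q (Ed n) (w \<omega>) (nat \<lfloor>\<gamma> n * t\<rfloor>) \<rho> y\<bar> > \<epsilon> / 10)}"

definition volume_event :: "'e \<Rightarrow> real \<Rightarrow> real \<Rightarrow> nat \<Rightarrow> 'w set" where
  "volume_event z \<delta> c n = {\<omega> \<in> space M.
      gmeasure (V n) (Ed n) (w \<omega>) (ball z \<delta>) = \<top> \<or>
      \<bar>enn2real (gmeasure (V n) (Ed n) (w \<omega>) (ball z \<delta>)) / \<beta> n - measure \<nu> (ball z \<delta>)\<bar>
        > c * measure \<nu> (ball z \<delta>)}"

definition walk_event :: "'e \<Rightarrow> real \<Rightarrow> real \<Rightarrow> nat \<Rightarrow> 'w set" where
  "walk_event z \<delta> c n = {\<omega> \<in> space M. \<exists>t\<in>{a..b + 1}.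
      \<bar>walk_prob (Ed n) (w \<omega>) (nat \<lfloor>\<gamma> n * t\<rfloor>) \<rho> (ball z \<delta>) - (LINT y:(ball z \<delta> \<inter> F)|\<nu>. q t y)\<bar>
        > c * measure \<nu> (ball z \<delta>)}"

lemma sets_volume_event:
  assumes "n \<ge> 1"
  shows "volume_event z \<delta> c n \<in> sets M"
proof -
  have [measurable]: "(\<lambda>\<omega>. gmeasure (V n) (Ed n) (w \<omega>) (ball z \<delta>)) \<in> borel_measurable M"
    using assms by (rule measurable_gmeasure_graph)
  show ?thesis
    unfolding volume_event_def by measurable
qed

lemma sets_walk_event: "walk_event z \<delta> c n \<in> sets M"
  unfolding walk_event_def
proof (rule sets_Collect_bex_finite_image[where f = "\<lambda>k \<omega>. walk_prob (Ed n) (w \<omega>) k \<rho> (ball z \<delta>)"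
      and h = "\<lambda>t. nat \<lfloor>\<gamma> n * t\<rfloor>"
      and P = "\<lambda>t p. c * measure \<nu> (ball z \<delta>) < \<bar>p - (LINT y:(ball z \<delta> \<inter> F)|\<nu>. q t y)\<bar>"])
  show "(\<lambda>\<omega>. walk_prob (Ed n) (w \<omega>) k \<rho> (ball z \<delta>)) \<in> borel_measurable M" for k
    by (rule measurable_walk_prob[OF w_meas])
  show "finite ((\<lambda>t. nat \<lfloor>\<gamma> n * t\<rfloor>) ` {a..b + 1})"
    by (rule finite_image_nat_floor[OF gamma_nonneg])
  show "open {p. c * measure \<nu> (ball z \<delta>) < \<bar>p - (LINT y:(ball z \<delta> \<inter> F)|\<nu>. q t y)\<bar>}" for t
    by (intro open_Collect_less continuous_intros)
qed

lemma sets_osc_event: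
  assumes "n \<ge> 1"
  shows "osc_event s \<delta> n \<in> sets M"
proof -
  let ?G = "gball (V n) (Ed n) \<rho> (\<alpha> n * s)"
  let ?E = "\<lambda>x y. {\<omega> \<in> space M. \<exists>t\<in>{a..b}. \<epsilon> / 10 < \<beta> n * \<bar>hk_q (Ed n) (w \<omega>) (nat \<lfloor>\<gamma> n * t\<rfloor>) \<rho> x
      - hk_q (Ed n) (w \<omega>) (nat \<lfloor>\<gamma> n * t\<rfloor>) \<rho> y\<bar>}"
  have "finite ?G"
    by (rule finite_gball[where Ed = "Ed n"]) (use assms finite_neighbours connected rho_V in auto)
  have "?E x y \<in> sets M" for x y
  proof (rule sets_Collect_bex_finite_image[where h = "\<lambda>t. nat \<lfloor>\<gamma> n * t\<rfloor>" and P = "\<lambda>t p. \<epsilon> / 10 < p"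
        and f = "\<lambda>k \<omega>. \<beta> n * \<bar>hk_q (Ed n) (w \<omega>) k \<rho> x - hk_q (Ed n) (w \<omega>) k \<rho> y\<bar>"])
    fix k
    have [measurable]: "(\<lambda>\<omega>. hk_q (Ed n) (w \<omega>) k \<rho> x) \<in> borel_measurable M"
      "(\<lambda>\<omega>. hk_q (Ed n) (w \<omega>) k \<rho> y) \<in> borel_measurable M"
      by (rule measurable_hk_q[OF w_meas])+
    show "(\<lambda>\<omega>. \<beta> n * \<bar>hk_q (Ed n) (w \<omega>) k \<rho> x - hk_q (Ed n) (w \<omega>) k \<rho> y\<bar>) \<in> borel_measurable M"
      by measurable
  next
    show "finite ((\<lambda>t. nat \<lfloor>\<gamma> n * t\<rfloor>) ` {a..b})"
      by (rule finite_image_nat_floor[OF gamma_nonneg])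
    show "open {p. \<epsilon> / 10 < p}"
      by (intro open_Collect_less continuous_intros)
  qed
  moreover have "osc_event s \<delta> n = (\<Union>x\<in>?G. \<Union>y\<in>{y\<in>?G. gdist (V n) (Ed n) x y \<le> \<alpha> n * \<delta>}. ?E x y)"
    unfolding osc_event_def by blast
  ultimately show ?thesis
    using \<open>finite ?G\<close> by (auto intro!: sets.finite_UN)
qed

lemma volume_event_tendsto_0:
  assumes "z \<in> F" "\<delta> > 0" "c > 0"
  shows "(\<lambda>n. measure M (volume_event z \<delta> c n)) \<longlonglongrightarrow> 0"
  unfolding volume_event_def
  using A1R_c[OF assms(1,2), of "c * measure \<nu> (ball z \<delta>)"] measure_ball_pos[OF assms(1,2)] assms(3)
  by simp

lemma walk_event_tendsto_0:
  assumes "z \<in> F" "\<delta> > 0" "c > 0"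
  shows "(\<lambda>n. measure M (walk_event z \<delta> c n)) \<longlonglongrightarrow> 0"
  unfolding walk_event_def
  using A1R_d[OF a_pos _ assms(1,2), of "b + 1" "c * measure \<nu> (ball z \<delta>)"] ab
    measure_ball_pos[OF assms(1,2)] assms(3)
  by simp

lemma net_events_tendsto_0:
  assumes "Z \<subseteq> F" "\<delta> > 0" "c > 0" "c' > 0"
  shows "(\<lambda>n. \<Sum>z\<in>Z. measure M (volume_event z \<delta> c n) + measure M (walk_event z \<delta> c' n)) \<longlonglongrightarrow> 0"
  using assms by (intro tendsto_null_sum tendsto_add_zero volume_event_tendsto_0 walk_event_tendsto_0) auto

lemma osc_event_small:
  assumes "\<eta> > 0" "s > 0" "d > 0"
  obtains \<delta> where "0 < \<delta>" "\<delta> < d" "eventually (\<lambda>n. measure M (osc_event s \<delta> n) < \<eta>) sequentially"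
proof -
  have "((\<lambda>\<delta>. limsup (\<lambda>n. ereal (measure M (osc_event s \<delta> n)))) \<longlongrightarrow> 0) (at_right 0)"
    unfolding osc_event_def using A2R[OF a_pos ab \<open>s > 0\<close>, of "\<epsilon> / 10"] eps_pos by simp
  then have "eventually (\<lambda>\<delta>. limsup (\<lambda>n. ereal (measure M (osc_event s \<delta> n))) < ereal \<eta>) (at_right 0)"
    using \<open>\<eta> > 0\<close> by (intro order_tendstoD(2)) auto
  moreover have "eventually (\<lambda>\<delta>::real. 0 < \<delta> \<and> \<delta> < d) (at_right 0)"
    unfolding eventually_at_right_field using \<open>d > 0\<close> by blast
  ultimately obtain \<delta> where "0 < \<delta>" "\<delta> < d"
    and "limsup (\<lambda>n. ereal (measure M (osc_event s \<delta> n))) < ereal \<eta>"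
    using eventually_happens'[OF trivial_limit_at_right_real eventually_conj] by blast
  moreover from this(3) have "eventually (\<lambda>n. measure M (osc_event s \<delta> n) < \<eta>) sequentially"
    by (auto dest: Limsup_lessD)
  ultimately show thesis
    using that by blast
qed

lemma eventually_nearest_vertex_close:
  assumes "\<delta> > 0"
  shows "eventually (\<lambda>n. \<forall>x\<in>F \<inter> ball \<rho> r. dist x (g n x) < \<delta>) sequentially"
proof -
  have "0 < ereal \<delta>"
    using assms by simp
  from order_tendstoD(2)[OF A1R_b[OF r_pos] this] eventually_ge_at_top[of 1]
  show ?thesis
  proof eventually_elim
    case (elim n)
    show ?case
    proof
      fix x assume "x \<in> F \<inter> ball \<rho> r"
      then have "ereal (infdist x (V n)) < ereal \<delta>"
        using elim(1) by (meson SUP_upper le_less_trans)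
      moreover have "V n \<noteq> {}"
        using rho_V[OF elim(2)] by blast
      moreover have "bdd_below (dist x ` V n)"
        by (rule bdd_belowI[of _ 0]) auto
      ultimately obtain y where "y \<in> V n" "dist x y < \<delta>"
        by (auto simp: infdist_notempty cINF_less_iff)
      then show "dist x (g n x) < \<delta>"
        using g_min[OF elim(2)] by (meson le_less_trans)
    qed
  qed
qed

lemma ball_Int_F_props:
  shows "ball z \<delta> \<inter> F \<in> sets \<nu>" and "emeasure \<nu> (ball z \<delta> \<inter> F) < \<infinity>"
    and "measure \<nu> (ball z \<delta> \<inter> F) = measure \<nu> (ball z \<delta>)"
proof -
  show "ball z \<delta> \<inter> F \<in> sets \<nu>"
    using closed_F nu_sets by simp
  then show "emeasure \<nu> (ball z \<delta> \<inter> F) < \<infinity>" "measure \<nu> (ball z \<delta> \<inter> F) = measure \<nu> (ball z \<delta>)"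
    using emeasure_Int_F[of "ball z \<delta>"] emeasure_ball_less_top[of z \<delta>] nu_sets
    by (simp_all add: measure_def)
qed

lemma set_integrable_q_ball:
  assumes "t > 0"
  shows "set_integrable \<nu> (ball z \<delta> \<inter> F) (q t)"
  by (rule set_integrable_subset[OF q_integrable[OF assms] ball_Int_F_props(1)]) auto

lemma ball_Int_F_subset:
  assumes "z \<in> cball \<rho> r" "\<delta> \<le> 1"
  shows "ball z \<delta> \<inter> F \<subseteq> F \<inter> cball \<rho> (r + 1)"
proof
  fix y assume "y \<in> ball z \<delta> \<inter> F"
  moreover have "dist \<rho> y \<le> dist \<rho> z + dist z y"
    by (rule dist_triangle)
  ultimately show "y \<in> F \<inter> cball \<rho> (r + 1)"
    using assms by auto
qed

text \<open>\<open>du\<close> is a modulus of uniform continuity and \<open>Qm\<close> a bound of \<open>q\<close> on the compact set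
  \<open>[a, b + 1] \<times> (F \<inter> cball \<rho> (r + 1))\<close>; \<open>C2\<close>, \<open>\<alpha>'\<close>, \<open>n0\<close> are the constants of the upper
  bound in (A1R)(a) for radius \<open>r + 1\<close>.\<close>

context
  fixes du Qm C2 :: real and \<alpha>' :: "nat \<Rightarrow> real" and n0 :: nat
  assumes du_pos: "du > 0"
    and q_modulus: "\<And>t t' x y. t \<in> {a..b + 1} \<Longrightarrow> t' \<in> {a..b + 1} \<Longrightarrow>
        x \<in> F \<inter> cball \<rho> (r + 1) \<Longrightarrow> y \<in> F \<inter> cball \<rho> (r + 1) \<Longrightarrow>
        \<bar>t - t'\<bar> < du \<Longrightarrow> dist x y < du \<Longrightarrow> \<bar>q t x - q t' y\<bar> < \<epsilon> / 10"
    and Qm_nonneg: "Qm \<ge> 0"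
    and q_bound: "\<And>t x. t \<in> {a..b + 1} \<Longrightarrow> x \<in> F \<inter> cball \<rho> (r + 1) \<Longrightarrow> \<bar>q t x\<bar> \<le> Qm"
    and C2_pos: "C2 > 0"
    and gdist_le: "\<And>n x y. n \<ge> n0 \<Longrightarrow> x \<in> V n \<inter> ball \<rho> (r + 1) \<Longrightarrow> y \<in> V n \<inter> ball \<rho> (r + 1) \<Longrightarrow>
        gdist (V n) (Ed n) x y \<le> C2 * \<alpha> n * dist x y + \<alpha>' n"
    and \<alpha>'_nonneg: "\<And>n. \<alpha>' n \<ge> 0"
    and \<alpha>'_small: "\<alpha>' \<in> o(\<alpha>)"
begin

lemma kernel_integral_time_close:
  assumes "z \<in> cball \<rho> r" "\<delta> \<le> 1" "t \<in> {a..b + 1}" "t' \<in> {a..b + 1}" "\<bar>t' - t\<bar> < du"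
  shows "\<bar>(LINT y:(ball z \<delta> \<inter> F)|\<nu>. q t' y) - (LINT y:(ball z \<delta> \<inter> F)|\<nu>. q t y)\<bar>
    \<le> \<epsilon> / 10 * measure \<nu> (ball z \<delta>)"
proof -
  have "set_integrable \<nu> (ball z \<delta> \<inter> F) (q t)" "set_integrable \<nu> (ball z \<delta> \<inter> F) (q t')"
    using assms a_pos by (auto intro!: set_integrable_q_ball)
  then have "\<bar>(LINT y:(ball z \<delta> \<inter> F)|\<nu>. q t' y) - (LINT y:(ball z \<delta> \<inter> F)|\<nu>. q t y)\<bar>
      \<le> \<epsilon> / 10 * measure \<nu> (ball z \<delta> \<inter> F)"
  proof (intro set_integral_diff_le ball_Int_F_props(1,2))
    fix y assume "y \<in> ball z \<delta> \<inter> F"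
    then have "y \<in> F \<inter> cball \<rho> (r + 1)"
      using ball_Int_F_subset[OF assms(1,2)] by blast
    then show "\<bar>q t' y - q t y\<bar> \<le> \<epsilon> / 10"
      using q_modulus[OF assms(4,3), of y y] assms(5) du_pos by (simp add: less_imp_le)
  qed
  then show ?thesis
    by (simp add: ball_Int_F_props(3))
qed

lemma kernel_integral_bounds:
  assumes "z \<in> cball \<rho> r" "\<delta> \<le> 1" "t \<in> {a..b + 1}"
  shows "0 \<le> (LINT y:(ball z \<delta> \<inter> F)|\<nu>. q t y)"
    and "(LINT y:(ball z \<delta> \<inter> F)|\<nu>. q t y) \<le> Qm * measure \<nu> (ball z \<delta>)"
proof -
  have int: "set_integrable \<nu> (ball z \<delta> \<inter> F) (q t)"
    using assms a_pos by (intro set_integrable_q_ball) auto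
  have const: "set_integrable \<nu> (ball z \<delta> \<inter> F) (\<lambda>_. c)" for c :: real
    using ball_Int_F_props(1,2) by (rule set_integrable_const)
  have "(LINT y:(ball z \<delta> \<inter> F)|\<nu>. 0) \<le> (LINT y:(ball z \<delta> \<inter> F)|\<nu>. q t y)"
    using assms a_pos by (intro set_integral_mono[OF const int] q_nonneg) auto
  then show "0 \<le> (LINT y:(ball z \<delta> \<inter> F)|\<nu>. q t y)"
    by simp
  have "(LINT y:(ball z \<delta> \<inter> F)|\<nu>. q t y) \<le> (LINT y:(ball z \<delta> \<inter> F)|\<nu>. Qm)"
  proof (rule set_integral_mono[OF int const])
    fix y assume "y \<in> ball z \<delta> \<inter> F"
    then show "q t y \<le> Qm"
      using ball_Int_F_subset[OF assms(1,2)] q_bound[OF assms(3)] by (meson abs_ge_self order.trans subsetD)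
  qed
  also have "(LINT y:(ball z \<delta> \<inter> F)|\<nu>. Qm) = Qm * measure \<nu> (ball z \<delta>)"
    using ball_Int_F_props(2)[of z \<delta>]
    by (simp add: set_integral_const ball_Int_F_props(1,3) less_top)
  finally show "(LINT y:(ball z \<delta> \<inter> F)|\<nu>. q t y) \<le> Qm * measure \<nu> (ball z \<delta>)" .
qed

lemma kernel_average_close:
  assumes z: "z \<in> F \<inter> cball \<rho> r" and \<delta>: "0 < \<delta>" "\<delta> \<le> 1" "2 * \<delta> \<le> du"
    and x: "x \<in> F" "dist z x < \<delta>" and t: "t \<in> {a..b + 1}"
  shows "\<bar>(LINT y:(ball z \<delta> \<inter> F)|\<nu>. q t y) / measure \<nu> (ball z \<delta>) - q t x\<bar> \<le> \<epsilon> / 10"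
proof -
  have "dist \<rho> x \<le> dist \<rho> z + dist z x"
    by (rule dist_triangle)
  then have "x \<in> F \<inter> cball \<rho> (r + 1)"
    using z x \<delta> by auto
  have "measure \<nu> (ball z \<delta> \<inter> F) > 0"
    using measure_ball_pos[of z \<delta>] z \<delta> by (simp add: ball_Int_F_props(3))
  moreover have "set_integrable \<nu> (ball z \<delta> \<inter> F) (q t)"
    using t a_pos by (intro set_integrable_q_ball) auto
  ultimately have "\<bar>(LINT y:(ball z \<delta> \<inter> F)|\<nu>. q t y) / measure \<nu> (ball z \<delta> \<inter> F) - q t x\<bar> \<le> \<epsilon> / 10"
  proof (intro set_integral_average_close ball_Int_F_props(1,2))
    fix y assume y: "y \<in> ball z \<delta> \<inter> F"
    have "dist y x \<le> dist y z + dist z x"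
      by (rule dist_triangle)
    then have "dist y x < du"
      using y x \<delta> by (simp add: dist_commute)
    moreover have "y \<in> F \<inter> cball \<rho> (r + 1)"
      using ball_Int_F_subset[of z \<delta>] y z \<delta> by auto
    ultimately have "\<bar>q t y - q t x\<bar> < \<epsilon> / 10"
      using q_modulus[OF t t _ \<open>x \<in> F \<inter> cball \<rho> (r + 1)\<close>] du_pos by simp
    then show "\<bar>q t y - q t x\<bar> \<le> \<epsilon> / 10"
      by (rule less_imp_le)
  qed
  then show ?thesis
    by (simp add: ball_Int_F_props(3))
qed

lemma mem_gball_rho:
  assumes "n \<ge> 1" "n \<ge> n0" "\<alpha>' n < \<alpha> n" "y \<in> V n \<inter> ball \<rho> (r + 1)"
  shows "y \<in> gball (V n) (Ed n) \<rho> (\<alpha> n * (C2 * (r + 1) + 1))"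
proof -
  have "gdist (V n) (Ed n) \<rho> y \<le> C2 * \<alpha> n * dist \<rho> y + \<alpha>' n"
    using assms rho_V r_pos by (intro gdist_le) auto
  also have "\<dots> \<le> C2 * \<alpha> n * (r + 1) + \<alpha>' n"
    using assms C2_pos alpha_nonneg[of n] by (intro add_right_mono mult_left_mono) auto
  also have "\<dots> < \<alpha> n * (C2 * (r + 1) + 1)"
    using assms(3) by (simp add: algebra_simps)
  finally show ?thesis
    using assms(4) by (simp add: gball_def)
qed

text \<open>The triangle inequality puts \<open>y\<close> and \<open>g\<^sub>n(x)\<close> within Euclidean distance \<open>3\<delta>\<close>, hence within
  graph distance \<open>\<alpha>(n) \<delta>'\<close>, so the oscillation event (A2R) controls their kernel values.\<close>

lemma hk_q_oscillation_small:
  assumes \<delta>: "\<delta> \<le> 1 / 2" "6 * C2 * \<delta> \<le> \<delta>'" "\<delta>' \<le> 1"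
    and n: "n \<ge> 1" "n \<ge> n0" "\<alpha> n > 0" "\<alpha>' n \<le> \<delta>' / 2 * \<alpha> n"
    and \<omega>: "\<omega> \<in> space M" "\<omega> \<notin> osc_event (C2 * (r + 1) + 1) \<delta>' n"
    and x: "x \<in> ball \<rho> r" "dist z x < \<delta>" "dist x (g n x) < \<delta>" and t: "t \<in> {a..b}"
    and y: "y \<in> ball z \<delta> \<inter> V n"
  shows "\<beta> n * \<bar>hk_q (Ed n) (w \<omega>) (nat \<lfloor>\<gamma> n * t\<rfloor>) \<rho> y - hk_q (Ed n) (w \<omega>) (nat \<lfloor>\<gamma> n * t\<rfloor>) \<rho> (g n x)\<bar>
    \<le> \<epsilon> / 10"
proof -
  have "\<delta>' / 2 * \<alpha> n \<le> 1 / 2 * \<alpha> n"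
    using \<delta>(3) n(3) by (intro mult_right_mono) auto
  then have "\<alpha>' n < \<alpha> n"
    using n(3,4) by linarith
  have "dist \<rho> (g n x) \<le> dist \<rho> x + dist x (g n x)" "dist \<rho> y \<le> dist \<rho> x + dist x z + dist z y"
    "dist y (g n x) \<le> dist y z + dist z x + dist x (g n x)"
    by (metis dist_triangle add.assoc order.trans add_right_mono)+
  then have v: "g n x \<in> V n \<inter> ball \<rho> (r + 1)" and y': "y \<in> V n \<inter> ball \<rho> (r + 1)"
    and "dist y (g n x) < 3 * \<delta>"
    using g_V[OF n(1)] x y \<delta>(1) by (auto simp: dist_commute)
  then have "C2 * \<alpha> n * dist y (g n x) \<le> C2 * \<alpha> n * (3 * \<delta>)"
    using C2_pos n(3) by (intro mult_left_mono) auto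
  moreover have "C2 * \<alpha> n * (3 * \<delta>) = \<alpha> n * (3 * C2 * \<delta>)"
    by (simp add: algebra_simps)
  moreover have "\<alpha> n * (3 * C2 * \<delta>) \<le> \<alpha> n * (\<delta>' / 2)"
    using \<delta>(2) n(3) by (intro mult_left_mono) auto
  ultimately have close: "gdist (V n) (Ed n) y (g n x) \<le> \<alpha> n * \<delta>'"
    using gdist_le[OF n(2) y' v] n(4) by (simp add: algebra_simps)
  have gball: "y \<in> gball (V n) (Ed n) \<rho> (\<alpha> n * (C2 * (r + 1) + 1))"
    "g n x \<in> gball (V n) (Ed n) \<rho> (\<alpha> n * (C2 * (r + 1) + 1))"
    using mem_gball_rho[OF n(1,2) \<open>\<alpha>' n < \<alpha> n\<close>] y' v by auto
  show ?thesis
  proof (rule ccontr)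
    assume "\<not> ?thesis"
    then have "\<epsilon> / 10 < \<beta> n * \<bar>hk_q (Ed n) (w \<omega>) (nat \<lfloor>\<gamma> n * t\<rfloor>) \<rho> y
        - hk_q (Ed n) (w \<omega>) (nat \<lfloor>\<gamma> n * t\<rfloor>) \<rho> (g n x)\<bar>"
      by (simp only: not_le)
    then have "\<omega> \<in> osc_event (C2 * (r + 1) + 1) \<delta>' n"
      unfolding osc_event_def using \<omega>(1) gball close t by blast
    with \<omega>(2) show False by contradiction
  qed
qed

lemma hk_q_mult_volume_close:
  assumes \<delta>: "\<delta> \<le> 1 / 2" "6 * C2 * \<delta> \<le> \<delta>'" "\<delta>' \<le> 1"
    and n: "n \<ge> 1" "n \<ge> n0" "\<beta> n > 0" "\<alpha> n > 0" "\<alpha>' n \<le> \<delta>' / 2 * \<alpha> n"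
    and \<omega>: "\<omega> \<in> space M" "\<omega> \<notin> osc_event (C2 * (r + 1) + 1) \<delta>' n"
    and x: "x \<in> ball \<rho> r" "dist z x < \<delta>" "dist x (g n x) < \<delta>" and t: "t \<in> {a..b}"
    and finite_volume: "gmeasure (V n) (Ed n) (w \<omega>) (ball z \<delta>) \<noteq> \<top>"
  shows "\<bar>hk_q (Ed n) (w \<omega>) (nat \<lfloor>\<gamma> n * t\<rfloor>) \<rho> (g n x) * enn2real (gmeasure (V n) (Ed n) (w \<omega>) (ball z \<delta>))
      - (walk_prob (Ed n) (w \<omega>) (nat \<lfloor>\<gamma> n * t\<rfloor>) \<rho> (ball z \<delta>)
         + walk_prob (Ed n) (w \<omega>) (Suc (nat \<lfloor>\<gamma> n * t\<rfloor>)) \<rho> (ball z \<delta>)) / 2\<bar>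
    \<le> \<epsilon> / 10 / \<beta> n * enn2real (gmeasure (V n) (Ed n) (w \<omega>) (ball z \<delta>))"
proof (rule hk_q_local_average[where V = "V n"])
  show "finite {y. Ed n u y}" for u
    using n(1) by (rule finite_neighbours)
  show "Ed n u y \<Longrightarrow> y \<in> V n" for u y
    using Ed_V n(1) by blast
  show "Ed n u y \<Longrightarrow> w \<omega> u y > 0" for u y
    using w_pos \<omega>(1) n(1) by blast
  show "y \<in> V n \<Longrightarrow> vweight (Ed n) (w \<omega>) y > 0" for y
    using vweight_positive n(1) \<omega>(1) by blast
  show "\<rho> \<in> V n"
    using n(1) by (rule rho_V)
  show "gmeasure (V n) (Ed n) (w \<omega>) (ball z \<delta>) \<noteq> \<top>"
    by (rule finite_volume)
  fix y assume "y \<in> ball z \<delta> \<inter> V n"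
  with hk_q_oscillation_small[OF \<delta> n(1,2,4,5) \<omega> x t]
  have "\<beta> n * \<bar>hk_q (Ed n) (w \<omega>) (nat \<lfloor>\<gamma> n * t\<rfloor>) \<rho> y - hk_q (Ed n) (w \<omega>) (nat \<lfloor>\<gamma> n * t\<rfloor>) \<rho> (g n x)\<bar>
      \<le> \<epsilon> / 10" .
  then show "\<bar>hk_q (Ed n) (w \<omega>) (nat \<lfloor>\<gamma> n * t\<rfloor>) \<rho> y - hk_q (Ed n) (w \<omega>) (nat \<lfloor>\<gamma> n * t\<rfloor>) \<rho> (g n x)\<bar>
      \<le> \<epsilon> / 10 / \<beta> n"
    using n(3) by (simp add: field_simps)
qed

text \<open>(A1R)(d) is used at the two times \<open>t\<close> and \<open>t + 1/\<gamma>(n)\<close>, whose walk times are \<open>m\<close> and \<open>m + 1\<close>.\<close>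

lemma average_walk_prob_close:
  assumes z: "z \<in> cball \<rho> r" and \<delta>: "\<delta> \<le> 1" and \<gamma>: "\<gamma> n > max 1 (1 / du)"
    and \<omega>: "\<omega> \<in> space M" "\<omega> \<notin> walk_event z \<delta> (\<epsilon> / 20) n" and t: "t \<in> {a..b}"
  shows "\<bar>(walk_prob (Ed n) (w \<omega>) (nat \<lfloor>\<gamma> n * t\<rfloor>) \<rho> (ball z \<delta>)
         + walk_prob (Ed n) (w \<omega>) (Suc (nat \<lfloor>\<gamma> n * t\<rfloor>)) \<rho> (ball z \<delta>)) / 2
      - (LINT y:(ball z \<delta> \<inter> F)|\<nu>. q t y)\<bar> \<le> \<epsilon> / 10 * measure \<nu> (ball z \<delta>)"
proof -
  define t' where "t' = t + 1 / \<gamma> n"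
  have "\<gamma> n > 1" "1 / du < \<gamma> n"
    using \<gamma> by auto
  then have inv: "0 < 1 / \<gamma> n" "1 / \<gamma> n < 1" "1 / \<gamma> n < du"
    using du_pos by (auto simp: field_simps)
  have "a \<le> t" "t \<le> b"
    using t by auto
  then have "t' \<in> {a..b + 1}"
    unfolding t'_def atLeastAtMost_iff using inv by (intro conjI) linarith+
  moreover have "\<bar>t' - t\<bar> < du"
    unfolding t'_def using inv by (metis add_diff_cancel_left' abs_of_pos)
  ultimately have t': "t' \<in> {a..b + 1}" "\<bar>t' - t\<bar> < du" .
  have "nat \<lfloor>\<gamma> n * t'\<rfloor> = Suc (nat \<lfloor>\<gamma> n * t\<rfloor>)"
    unfolding t'_def using \<open>\<gamma> n > 1\<close> t a_pos by (intro nat_floor_add_inverse) auto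
  moreover have walk: "\<bar>walk_prob (Ed n) (w \<omega>) (nat \<lfloor>\<gamma> n * s\<rfloor>) \<rho> (ball z \<delta>)
      - (LINT y:(ball z \<delta> \<inter> F)|\<nu>. q s y)\<bar> \<le> \<epsilon> / 20 * measure \<nu> (ball z \<delta>)"
    if "s \<in> {a..b + 1}" for s
    using \<omega> that by (auto simp: walk_event_def not_less)
  moreover have "t \<in> {a..b + 1}"
    using t by auto
  ultimately have "\<bar>walk_prob (Ed n) (w \<omega>) (nat \<lfloor>\<gamma> n * t\<rfloor>) \<rho> (ball z \<delta>)
      - (LINT y:(ball z \<delta> \<inter> F)|\<nu>. q t y)\<bar> \<le> \<epsilon> / 20 * measure \<nu> (ball z \<delta>)"
    "\<bar>walk_prob (Ed n) (w \<omega>) (Suc (nat \<lfloor>\<gamma> n * t\<rfloor>)) \<rho> (ball z \<delta>)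
      - (LINT y:(ball z \<delta> \<inter> F)|\<nu>. q t' y)\<bar> \<le> \<epsilon> / 20 * measure \<nu> (ball z \<delta>)"
    using walk[OF t'(1)] by simp_all
  with kernel_integral_time_close[OF z \<delta> \<open>t \<in> {a..b + 1}\<close> t']
  show ?thesis
    by (intro abs_midpoint_diff_le) simp_all
qed

lemma hk_q_close_to_kernel:
  assumes \<delta>: "0 < \<delta>" "\<delta> \<le> 1 / 2" "2 * \<delta> \<le> du" "6 * C2 * \<delta> \<le> \<delta>'" "\<delta>' \<le> 1"
    and Z: "Z \<subseteq> F \<inter> cball \<rho> r" "F \<inter> cball \<rho> r \<subseteq> (\<Union>z\<in>Z. ball z \<delta>)"
    and n: "n \<ge> 1" "n \<ge> n0" "\<beta> n > 0" "\<alpha> n > 0" "\<alpha>' n \<le> \<delta>' / 2 * \<alpha> n" "\<gamma> n > max 1 (1 / du)"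
    and \<omega>: "\<omega> \<in> space M" "\<omega> \<notin> osc_event (C2 * (r + 1) + 1) \<delta>' n"
      "\<And>z. z \<in> Z \<Longrightarrow> \<omega> \<notin> volume_event z \<delta> (min (1 / 2) (\<epsilon> / (20 * (Qm + 1)))) n"
      "\<And>z. z \<in> Z \<Longrightarrow> \<omega> \<notin> walk_event z \<delta> (\<epsilon> / 20) n"
    and x: "x \<in> F \<inter> ball \<rho> r" "dist x (g n x) < \<delta>" and t: "t \<in> {a..b}"
  shows "\<bar>\<beta> n * hk_q (Ed n) (w \<omega>) (nat \<lfloor>\<gamma> n * t\<rfloor>) \<rho> (g n x) - q t x\<bar> < \<epsilon>"
proof -
  obtain z where z: "z \<in> Z" "dist z x < \<delta>"
    using x(1) Z(2) by fastforce
  then have zF: "z \<in> F \<inter> cball \<rho> r"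
    using Z(1) by blast
  let ?U = "enn2real (gmeasure (V n) (Ed n) (w \<omega>) (ball z \<delta>))"
  let ?N = "measure \<nu> (ball z \<delta>)"
  have "?N > 0"
    using zF \<delta>(1) by (intro measure_ball_pos) auto
  have finite_volume: "gmeasure (V n) (Ed n) (w \<omega>) (ball z \<delta>) \<noteq> \<top>"
    and vol: "\<bar>?U / \<beta> n - ?N\<bar> \<le> min (1 / 2) (\<epsilon> / (20 * (Qm + 1))) * ?N"
    using \<omega>(1) \<omega>(3)[OF z(1)] by (auto simp: volume_event_def not_less)
  have vol_le: "min (1 / 2) c * ?N \<le> 1 / 2 * ?N" "min (1 / 2) c * ?N \<le> c * ?N" for c :: real
    by (intro mult_right_mono; use \<open>?N > 0\<close> in simp)+
  note local_average = hk_q_mult_volume_close[OF \<delta>(2,4,5) n(1-5) \<omega>(1,2) _ z(2) x(2) t finite_volume]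
  have "t \<in> {a..b + 1}"
    using t by auto
  show ?thesis
  proof (rule ratio_chain_estimate[where N = "?U / \<beta> n" and \<nu> = ?N and Q = Qm])
    show "\<bar>\<beta> n * hk_q (Ed n) (w \<omega>) (nat \<lfloor>\<gamma> n * t\<rfloor>) \<rho> (g n x) * (?U / \<beta> n)
        - (walk_prob (Ed n) (w \<omega>) (nat \<lfloor>\<gamma> n * t\<rfloor>) \<rho> (ball z \<delta>)
           + walk_prob (Ed n) (w \<omega>) (Suc (nat \<lfloor>\<gamma> n * t\<rfloor>)) \<rho> (ball z \<delta>)) / 2\<bar>
      \<le> \<epsilon> / 10 * (?U / \<beta> n)"
      using local_average x(1) n(3) by simp
    show "\<bar>(walk_prob (Ed n) (w \<omega>) (nat \<lfloor>\<gamma> n * t\<rfloor>) \<rho> (ball z \<delta>)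
           + walk_prob (Ed n) (w \<omega>) (Suc (nat \<lfloor>\<gamma> n * t\<rfloor>)) \<rho> (ball z \<delta>)) / 2
        - (LINT y:(ball z \<delta> \<inter> F)|\<nu>. q t y)\<bar> \<le> \<epsilon> / 10 * ?N"
      using zF \<delta>(2) n(6) \<omega>(1) \<omega>(4)[OF z(1)] t by (intro average_walk_prob_close) auto
    show "\<bar>?U / \<beta> n - ?N\<bar> \<le> ?N / 2" "\<bar>?U / \<beta> n - ?N\<bar> \<le> \<epsilon> / (20 * (Qm + 1)) * ?N"
      using vol vol_le[of "\<epsilon> / (20 * (Qm + 1))"] by linarith+
    show "0 \<le> (LINT y:(ball z \<delta> \<inter> F)|\<nu>. q t y)" "(LINT y:(ball z \<delta> \<inter> F)|\<nu>. q t y) \<le> Qm * ?N"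
      using zF \<delta>(2) \<open>t \<in> {a..b + 1}\<close> by (intro kernel_integral_bounds; auto)+
    show "\<bar>(LINT y:(ball z \<delta> \<inter> F)|\<nu>. q t y) / ?N - q t x\<bar> \<le> \<epsilon> / 10"
      using zF \<delta>(1-3) x(1) z(2) \<open>t \<in> {a..b + 1}\<close> by (intro kernel_average_close) auto
  qed (use \<open>?N > 0\<close> eps_pos Qm_nonneg in auto)
qed

lemma eventually_scales:
  assumes "\<delta>' > 0"
  shows "eventually (\<lambda>n. 0 < \<beta> n \<and> 0 < \<alpha> n \<and> max 1 (1 / du) < \<gamma> n \<and> \<alpha>' n \<le> \<delta>' / 2 * \<alpha> n) sequentially"
proof -
  have "eventually (\<lambda>n. norm (\<alpha>' n) \<le> \<delta>' / 2 * norm (\<alpha> n)) sequentially"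
    using landau_o.smallD[OF \<alpha>'_small, of "\<delta>' / 2"] assms by simp
  then have "eventually (\<lambda>n. \<alpha>' n \<le> \<delta>' / 2 * \<alpha> n) sequentially"
    by eventually_elim (use alpha_nonneg \<alpha>'_nonneg in auto)
  moreover have "eventually (\<lambda>n. 0 < \<beta> n) sequentially" "eventually (\<lambda>n. 0 < \<alpha> n) sequentially"
    "eventually (\<lambda>n. max 1 (1 / du) < \<gamma> n) sequentially"
    using beta_lim alpha_lim gamma_lim unfolding filterlim_at_top_dense by blast+
  ultimately show ?thesis
    by eventually_elim blast
qed

lemma bad_event_subset:
  assumes \<delta>: "0 < \<delta>" "\<delta> \<le> 1 / 2" "2 * \<delta> \<le> du" "6 * C2 * \<delta> \<le> \<delta>'" "\<delta>' \<le> 1"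
    and Z: "Z \<subseteq> F \<inter> cball \<rho> r" "F \<inter> cball \<rho> r \<subseteq> (\<Union>z\<in>Z. ball z \<delta>)"
    and n: "n \<ge> 1" "n \<ge> n0" "\<beta> n > 0" "\<alpha> n > 0" "\<alpha>' n \<le> \<delta>' / 2 * \<alpha> n" "\<gamma> n > max 1 (1 / du)"
      "\<forall>x\<in>F \<inter> ball \<rho> r. dist x (g n x) < \<delta>"
  shows "bad_event n \<subseteq> osc_event (C2 * (r + 1) + 1) \<delta>' n \<union>
    (\<Union>z\<in>Z. volume_event z \<delta> (min (1 / 2) (\<epsilon> / (20 * (Qm + 1)))) n \<union> walk_event z \<delta> (\<epsilon> / 20) n)"
    (is "_ \<subseteq> ?E")
proof
  fix \<omega> assume "\<omega> \<in> bad_event n"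
  then obtain x t where \<omega>: "\<omega> \<in> space M" and x: "x \<in> F \<inter> ball \<rho> r" and t: "t \<in> {a..b}"
    and far: "\<bar>\<beta> n * hk_q (Ed n) (w \<omega>) (nat \<lfloor>\<gamma> n * t\<rfloor>) \<rho> (g n x) - q t x\<bar> > \<epsilon>"
    unfolding bad_event_def by blast
  show "\<omega> \<in> ?E"
  proof (rule ccontr)
    assume "\<omega> \<notin> ?E"
    then have "\<bar>\<beta> n * hk_q (Ed n) (w \<omega>) (nat \<lfloor>\<gamma> n * t\<rfloor>) \<rho> (g n x) - q t x\<bar> < \<epsilon>"
      using \<omega> x t n(7) by (intro hk_q_close_to_kernel[OF \<delta> Z n(1-6)]) auto
    with far show False
      by linarith
  qed
qed

lemma eventually_measure_bad_event_less:
  assumes "\<eta> > 0"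
  shows "eventually (\<lambda>n. measure M (bad_event n) < \<eta>) sequentially"
proof -
  define s where "s = C2 * (r + 1) + 1"
  have "C2 * (r + 1) > 0"
    using C2_pos r_pos by simp
  then have "s > 0"
    unfolding s_def by linarith
  obtain \<delta>' where \<delta>': "0 < \<delta>'" "\<delta>' < 1"
    and osc: "eventually (\<lambda>n. measure M (osc_event s \<delta>' n) < \<eta> / 2) sequentially"
    using osc_event_small[of "\<eta> / 2" s 1] assms \<open>s > 0\<close> by auto
  define \<delta> where "\<delta> = min (min (\<delta>' / (6 * C2)) (du / 2)) (1 / 2)"
  have "\<delta> \<le> \<delta>' / (6 * C2)"
    by (simp add: \<delta>_def)
  then have \<delta>: "0 < \<delta>" "\<delta> \<le> 1 / 2" "2 * \<delta> \<le> du" "6 * C2 * \<delta> \<le> \<delta>'"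
    using \<delta>'(1) du_pos C2_pos by (auto simp: \<delta>_def pos_le_divide_eq mult.commute)
  obtain Z where Z: "Z \<subseteq> F \<inter> cball \<rho> r" "finite Z" "F \<inter> cball \<rho> r \<subseteq> (\<Union>z\<in>Z. ball z \<delta>)"
  proof -
    have "F \<inter> cball \<rho> r \<subseteq> (\<Union>z\<in>F \<inter> cball \<rho> r. ball z \<delta>)"
      using \<delta>(1) by auto
    then show thesis
      using compactE_image[OF F_compact[OF r_pos], of "F \<inter> cball \<rho> r" "\<lambda>z. ball z \<delta>"] that by blast
  qed
  define c where "c = min (1 / 2) (\<epsilon> / (20 * (Qm + 1)))"
  have "c > 0"
    using eps_pos Qm_nonneg by (simp add: c_def)
  have net: "eventually (\<lambda>n. (\<Sum>z\<in>Z. measure M (volume_event z \<delta> c n)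
      + measure M (walk_event z \<delta> (\<epsilon> / 20) n)) < \<eta> / 2) sequentially"
    using Z(1) \<delta>(1) \<open>c > 0\<close> eps_pos assms by (intro order_tendstoD(2)[OF net_events_tendsto_0]) auto
  from osc net eventually_scales[OF \<delta>'(1)] eventually_nearest_vertex_close[OF \<delta>(1)]
    eventually_ge_at_top[of "max 1 n0"]
  show ?thesis
  proof eventually_elim
    case (elim n)
    have "bad_event n \<subseteq> osc_event s \<delta>' n \<union> (\<Union>z\<in>Z. volume_event z \<delta> c n \<union> walk_event z \<delta> (\<epsilon> / 20) n)"
      unfolding s_def c_def using elim
      by (intro bad_event_subset[OF \<delta> less_imp_le[OF \<delta>'(2)] Z(1,3)]) auto
    then have "measure M (bad_event n) \<le> measure M (osc_event s \<delta>' n)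
        + (\<Sum>z\<in>Z. measure M (volume_event z \<delta> c n) + measure M (walk_event z \<delta> (\<epsilon> / 20) n))"
      using Z(2) elim(5) by (intro measure_le_sum_of_cover sets_osc_event sets_volume_event sets_walk_event) auto
    with elim(1,2) show ?case
      by linarith
  qed
qed

end

lemma measure_bad_event_tendsto_0: "(\<lambda>n. measure M (bad_event n)) \<longlonglongrightarrow> 0"
proof -
  let ?K = "F \<inter> cball \<rho> (r + 1)"
  have "compact ?K"
    using F_compact r_pos by simp
  have cont: "continuous_on ({a..b + 1} \<times> ?K) (\<lambda>(t, x). q t x)"
    using a_pos by (intro continuous_on_subset[OF q_cont]) auto
  have "\<epsilon> / 10 > 0"
    using eps_pos by simp
  obtain du where "du > 0"
    and du: "\<And>t t' x y. t \<in> {a..b + 1} \<Longrightarrow> t' \<in> {a..b + 1} \<Longrightarrow> x \<in> ?K \<Longrightarrow> y \<in> ?K \<Longrightarrow>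
        \<bar>t - t'\<bar> < du \<Longrightarrow> dist x y < du \<Longrightarrow> \<bar>q t x - q t' y\<bar> < \<epsilon> / 10"
    using uniform_modulus_on_compact[OF \<open>compact ?K\<close> cont \<open>\<epsilon> / 10 > 0\<close>] by blast
  obtain Qm where "Qm \<ge> 0" and Qm: "\<And>t x. t \<in> {a..b + 1} \<Longrightarrow> x \<in> ?K \<Longrightarrow> \<bar>q t x\<bar> \<le> Qm"
    using bound_on_compact[OF \<open>compact ?K\<close> cont] by blast
  obtain \<alpha>' c2 n0 where \<alpha>': "\<And>n. \<alpha>' n \<ge> 0" "\<alpha>' \<in> o(\<alpha>)"
    and c2: "\<And>n x y. n \<ge> n0 \<Longrightarrow> x \<in> V n \<inter> ball \<rho> (r + 1) \<Longrightarrow> y \<in> V n \<inter> ball \<rho> (r + 1) \<Longrightarrow>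
        gdist (V n) (Ed n) x y \<le> c2 * \<alpha> n * dist x y + \<alpha>' n"
    using A1R_a2 r_pos by (metis add_pos_pos zero_less_one)
  have gdist: "gdist (V n) (Ed n) x y \<le> max c2 1 * \<alpha> n * dist x y + \<alpha>' n"
    if "n \<ge> n0" "x \<in> V n \<inter> ball \<rho> (r + 1)" "y \<in> V n \<inter> ball \<rho> (r + 1)" for n x y
  proof -
    have "c2 * \<alpha> n * dist x y \<le> max c2 1 * \<alpha> n * dist x y"
      using alpha_nonneg[of n] by (intro mult_right_mono) auto
    then show ?thesis
      using c2[OF that] by linarith
  qed
  have "eventually (\<lambda>n. measure M (bad_event n) < \<eta>) sequentially" if "\<eta> > 0" for \<eta>
    by (rule eventually_measure_bad_event_less[OF \<open>du > 0\<close> du \<open>Qm \<ge> 0\<close> Qm _ gdist \<alpha>' that]) auto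
  then show ?thesis
    by (intro order_tendstoI) (auto intro: always_eventually less_le_trans[OF _ measure_nonneg])
qed

end

theorem theorem6p1:
  fixes F :: "'e::metric_space set" and \<nu> :: "'e measure" and \<rho> :: 'e
    and q :: "real \<Rightarrow> 'e \<Rightarrow> real"
    and V :: "nat \<Rightarrow> 'e set" and Ed :: "nat \<Rightarrow> 'e \<Rightarrow> 'e \<Rightarrow> bool"
    and M :: "'w measure" and w :: "'w \<Rightarrow> 'e \<Rightarrow> 'e \<Rightarrow> real"
    and \<alpha> \<beta> \<gamma> :: "nat \<Rightarrow> real" and g :: "nat \<Rightarrow> 'e \<Rightarrow> 'e"
    and a b r \<epsilon> :: real
  assumes F_compact: "\<And>x s. s > 0 \<Longrightarrow> compact (F \<inter> cball x s)"
    and rho_F: "\<rho> \<in> F"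
    and nu_sets: "sets \<nu> = sets borel"
    and nu_F: "emeasure \<nu> (UNIV - F) = 0"
    and nu_locfin: "\<And>x. x \<in> F \<Longrightarrow> \<exists>e>0. emeasure \<nu> (ball x e) < \<infinity>"
    and nu_inner_regular: "\<And>A. A \<in> sets \<nu> \<Longrightarrow>
          emeasure \<nu> A = (SUP K \<in> {K. compact K \<and> K \<subseteq> A}. emeasure \<nu> K)"
    and nu_full_support: "\<And>x s. x \<in> F \<Longrightarrow> s > 0 \<Longrightarrow> emeasure \<nu> (F \<inter> ball x s) > 0"
    and q_cont: "continuous_on ({0<..} \<times> F) (\<lambda>(t, x). q t x)"
    and q_nonneg: "\<And>t x. t > 0 \<Longrightarrow> x \<in> F \<Longrightarrow> q t x \<ge> 0"
    and q_integrable: "\<And>t. t > 0 \<Longrightarrow> set_integrable \<nu> F (q t)"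
    and q_int_one: "\<And>t. t > 0 \<Longrightarrow> (LINT x:F|\<nu>. q t x) = 1"
    and Ed_V: "\<And>n x y. n \<ge> 1 \<Longrightarrow> Ed n x y \<Longrightarrow> x \<in> V n \<and> y \<in> V n"
    and Ed_sym: "\<And>n x y. n \<ge> 1 \<Longrightarrow> Ed n x y \<Longrightarrow> Ed n y x"
    and loc_fin: "\<And>n x. n \<ge> 1 \<Longrightarrow> x \<in> V n \<Longrightarrow> finite {y. Ed n x y}"
    and connected: "\<And>n x y. n \<ge> 1 \<Longrightarrow> x \<in> V n \<Longrightarrow> y \<in> V n \<Longrightarrow>
          \<exists>xs. is_walk (V n) (Ed n) x y xs"
    and two_vertices: "\<And>n. n \<ge> 1 \<Longrightarrow> \<exists>x\<in>V n. \<exists>y\<in>V n. x \<noteq> y"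
    and rho_V: "\<And>n. n \<ge> 1 \<Longrightarrow> \<rho> \<in> V n"
    and M_prob: "prob_space M"
    and w_meas: "\<And>x y. (\<lambda>\<omega>. w \<omega> x y) \<in> borel_measurable M"
    and w_sym: "\<And>\<omega> x y. \<omega> \<in> space M \<Longrightarrow> w \<omega> x y = w \<omega> y x"
    and w_pos: "\<And>\<omega> n x y. \<omega> \<in> space M \<Longrightarrow> n \<ge> 1 \<Longrightarrow> Ed n x y \<Longrightarrow> w \<omega> x y > 0"
    and alpha_nonneg: "\<And>n. \<alpha> n \<ge> 0" and beta_nonneg: "\<And>n. \<beta> n \<ge> 0"
    and gamma_nonneg: "\<And>n. \<gamma> n \<ge> 0"
    and alpha_lim: "filterlim \<alpha> at_top sequentially"
    and beta_lim: "filterlim \<beta> at_top sequentially"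
    and gamma_lim: "filterlim \<gamma> at_top sequentially"
    and g_V: "\<And>n x. n \<ge> 1 \<Longrightarrow> g n x \<in> V n"
    and g_min: "\<And>n x y. n \<ge> 1 \<Longrightarrow> y \<in> V n \<Longrightarrow> dist x (g n x) \<le> dist x y"
  \<comment> \<open>(A1R)(a)\<close>
    and A1R_a1: "\<exists>c1>0. \<forall>n\<ge>1. \<forall>x\<in>V n. \<forall>y\<in>V n.
          gdist (V n) (Ed n) x y \<ge> c1 * \<alpha> n * dist x y"
    and A1R_a2: "\<exists>\<alpha>' :: nat \<Rightarrow> real. (\<forall>n. \<alpha>' n \<ge> 0) \<and> \<alpha>' \<in> o(\<alpha>) \<and>
          (\<forall>s>0. \<exists>c2 n0. \<forall>n\<ge>n0. \<forall>x\<in>V n \<inter> ball \<rho> s. \<forall>y\<in>V n \<inter> ball \<rho> s.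
             gdist (V n) (Ed n) x y \<le> c2 * \<alpha> n * dist x y + \<alpha>' n)"
  \<comment> \<open>(A1R)(b)\<close>
    and A1R_b: "\<And>s. s > 0 \<Longrightarrow>
          (\<lambda>n. SUP x \<in> F \<inter> ball \<rho> s. ereal (infdist x (V n))) \<longlonglongrightarrow> 0"
  \<comment> \<open>(A1R)(c)\<close>
    and A1R_c: "\<And>x s e. x \<in> F \<Longrightarrow> s > 0 \<Longrightarrow> e > 0 \<Longrightarrow>
          (\<lambda>n. measure M {\<omega> \<in> space M.
              gmeasure (V n) (Ed n) (w \<omega>) (ball x s) = \<top> \<or>
              \<bar>enn2real (gmeasure (V n) (Ed n) (w \<omega>) (ball x s)) / \<beta> n
                 - measure \<nu> (ball x s)\<bar> > e}) \<longlonglongrightarrow> 0"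
  \<comment> \<open>(A1R)(d), for every compact interval [a',b'] \<subseteq> (0,\<infinity>)\<close>
    and A1R_d: "\<And>a' b' x s e. 0 < a' \<Longrightarrow> a' \<le> b' \<Longrightarrow> x \<in> F \<Longrightarrow> s > 0 \<Longrightarrow> e > 0 \<Longrightarrow>
          (\<lambda>n. measure M {\<omega> \<in> space M. \<exists>t\<in>{a'..b'}.
              \<bar>walk_prob (Ed n) (w \<omega>) (nat \<lfloor>\<gamma> n * t\<rfloor>) \<rho> (ball x s)
                 - (LINT y:(ball x s \<inter> F)|\<nu>. q t y)\<bar> > e}) \<longlonglongrightarrow> 0"
  \<comment> \<open>(A2R)\<close>
    and A2R: "\<And>a' b' s e. 0 < a' \<Longrightarrow> a' \<le> b' \<Longrightarrow> s > 0 \<Longrightarrow> e > 0 \<Longrightarrow>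
          ((\<lambda>\<delta>. limsup (\<lambda>n. ereal (measure M {\<omega> \<in> space M.
              \<exists>x\<in>gball (V n) (Ed n) \<rho> (\<alpha> n * s). \<exists>y\<in>gball (V n) (Ed n) \<rho> (\<alpha> n * s).
                gdist (V n) (Ed n) x y \<le> \<alpha> n * \<delta> \<and>
                (\<exists>t\<in>{a'..b'}. \<beta> n * \<bar>hk_q (Ed n) (w \<omega>) (nat \<lfloor>\<gamma> n * t\<rfloor>) \<rho> x
                    - hk_q (Ed n) (w \<omega>) (nat \<lfloor>\<gamma> n * t\<rfloor>) \<rho> y\<bar> > e)})))
           \<longlongrightarrow> 0) (at_right 0)"
  \<comment> \<open>the fixed compact interval I = [a,b] \<subseteq> (0,\<infinity>) and r, \<epsilon> > 0\<close>
    and a_pos: "0 < a" and ab: "a \<le> b" and r_pos: "r > 0" and eps_pos: "\<epsilon> > 0"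
  shows "(\<lambda>n. measure M {\<omega> \<in> space M. \<exists>x \<in> F \<inter> ball \<rho> r. \<exists>t\<in>{a..b}.
            \<bar>\<beta> n * hk_q (Ed n) (w \<omega>) (nat \<lfloor>\<gamma> n * t\<rfloor>) \<rho> (g n x) - q t x\<bar> > \<epsilon>})
         \<longlonglongrightarrow> 0"
proof -
  interpret heat_kernel_local_limit M F \<nu> \<rho> q V Ed w \<alpha> \<beta> \<gamma> g a b r \<epsilon>
    by (intro heat_kernel_local_limit.intro heat_kernel_local_limit_axioms.intro M_prob) (fact+)
  show ?thesis
    using measure_bad_event_tendsto_0 unfolding bad_event_def .
qed

end
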